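(* Let $w:\mathbb{Z}\to\mathbb{R}$ be a weight with $w(n)\geq 1$ for all $n$ and $\sup_{n\in\mathbb{Z}}\big(|\tfrac{w(n+1)}{w(n)}|+|\tfrac{w(n)}{w(n+1)}|\big)<\infty$, and fix $1\leq p\leq\infty$. Fix $\underline r=(r_-,r_+)\in\mathbb{N}_0^2$ and summation constants $c_{j,\pm}\in\mathbb{C}$. Suppose $(\alpha(t),\beta(t))$, $(\alpha_\ell(t),\beta_\ell(t))$ and $(\alpha_r(t),\beta_r(t))$ are arbitrary bounded solutions of the equation $\mathrm{AL}_{\underline r}(\alpha,\beta)=0$ of the Ablowitz--Ladik hierarchy, defined for $t\in(t_0-T,t_0+T)$, and set \[ \tilde\alpha(n,t)=\begin{cases}\alpha_r(n,t),& n\geq0,\\ \alpha_\ell(n,t),& n<0,\end{cases}\qquad \tilde\beta(n,t)=\begin{cases}\beta_r(n,t),& n\geq0,\\ \beta_\ell(n,t),& n<0.\end{cases} \] If $\|(\alpha(t)-\tilde\alpha(t),\beta(t)-\tilde\beta(t))\|_{w,p}<\infty$ holds for $t=t_0$, then it holds for all $t\in(t_0-T,t_0+T)$.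
   Context: Sequences are complex valued on $\mathbb{Z}$, $f^\pm(n)=f(n\pm1)$. Solutions are bounded on $\mathbb{Z}\times(t_0-T,t_0+T)$ and $C^1$ in $t$; $T>0$ is the length of the local existence interval. Ablowitz--Ladik hierarchy: define homogeneous coefficients recursively by $\hat f_{0,+}=-\alpha^+$, $\hat g_{0,+}=\tfrac12$, $\hat h_{0,+}=\beta$, $\hat f_{0,-}=\alpha$, $\hat g_{0,-}=\tfrac12$, $\hat h_{0,-}=-\beta^+$, and for $\ell\geq0$ \[ \hat g_{\ell+1,\pm}=\sum_{k=0}^{\ell}\hat f_{\ell-k,\pm}\hat h_{k,\pm}-\sum_{k=1}^{\ell}\hat g_{\ell+1-k,\pm}\hat g_{k,\pm}, \] \[ \hat f_{\ell+1,+}^-=\hat f_{\ell,+}-\alpha(\hat g_{\ell+1,+}+\hat g_{\ell+1,+}^-),\quad \hat h_{\ell+1,+}=\hat h_{\ell,+}^-+\beta(\hat g_{\ell+1,+}+\hat g_{\ell+1,+}^-), \] \[ \hat f_{\ell+1,-}=\hat f_{\ell,-}^-+\alpha(\hat g_{\ell+1,-}+\hat g_{\ell+1,-}^-),\quad \hat h_{\ell+1,-}^-=\hat h_{\ell,-}-\beta(\hat g_{\ell+1,-}+\hat g_{\ell+1,-}^-). \] Given constants $c_{j,\pm}\in\mathbb{C}$, set $f_{\ell,\pm}=\sum_{k=0}^{\ell}c_{\ell-k,\pm}\hat f_{k,\pm}$, and similarly $g_{\ell,\pm}$, $h_{\ell,\pm}$. (These satisfy $g_{0,+}=\tfrac12c_{0,+}$,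 $f_{0,+}=-c_{0,+}\alpha^+$, $h_{0,+}=c_{0,+}\beta$, $g_{\ell+1,+}-g_{\ell+1,+}^-=\alpha h_{\ell,+}^-+\beta f_{\ell,+}$, etc.) The equation $\mathrm{AL}_{\underline r}(\alpha,\beta)=0$ is \[ -i\alpha_t-\alpha(g_{r_+,+}+g_{r_-,-}^-)+f_{r_+-1,+}-f_{r_--1,-}^-=0,\qquad -i\beta_t+\beta(g_{r_+,+}^-+g_{r_-,-})-h_{r_--1,-}+h_{r_+-1,+}^-=0, \] where $f_{-1,\pm}=h_{-1,\pm}=0$. For example $\underline r=(1,1)$, $c_{0,\pm}=1$, $c_{1,\pm}=-2$ gives $-i\alpha_t-(1-\alpha\beta)(\alpha^-+\alpha^+)+2\alpha=0$, $-i\beta_t+(1-\alpha\beta)(\beta^-+\beta^+)-2\beta=0$. Norm: $\|(\alpha,\beta)\|_{w,p}=\big(\sum_n w(n)(|\alpha(n)|^p+|\beta(n)|^p)\big)^{1/p}$ for $1\leq p<\infty$, and $\|(\alpha,\beta)\|_{w,\infty}=\sup_n w(n)(|\alpha(n)|+|\beta(n)|)$. *)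

theory Defs
  imports "HOL-Analysis.Analysis"
begin

type_synonym seq = "int \<Rightarrow> complex"

text \<open>For a sign (True = +, False = -)
  and sequences a (alpha) and b (beta) at a fixed time, AL_hat_list s a b l is the
  list [(f_0,g_0,h_0), ..., (f_l,g_l,h_l)] of the homogeneous coefficients
  (hat f_{k,s}, hat g_{k,s}, hat h_{k,s}).  The recursion relations with shifts
  f^-(n) = f(n-1) are solved for the unshifted unknown.\<close>

primrec AL_hat_list :: "bool \<Rightarrow> seq \<Rightarrow> seq \<Rightarrow> nat \<Rightarrow> (seq \<times> seq \<times> seq) list" where
  "AL_hat_list s a b 0 =
     (if s then [(\<lambda>n. - a (n + 1), \<lambda>n. 1/2, \<lambda>n. b n)]
      else [(\<lambda>n. a n, \<lambda>n. 1/2, \<lambda>n. - b (n + 1))])"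
| "AL_hat_list s a b (Suc l) =
     (let L = AL_hat_list s a b l;
          F = (\<lambda>k. fst (L ! k));
          G = (\<lambda>k. fst (snd (L ! k)));
          H = (\<lambda>k. snd (snd (L ! k)));
          gn = (\<lambda>n. (\<Sum>k\<le>l. F (l - k) n * H k n) - (\<Sum>k\<in>{1..l}. G (l + 1 - k) n * G k n));
          fn = (if s then (\<lambda>n. F l (n + 1) - a (n + 1) * (gn (n + 1) + gn n))
                else (\<lambda>n. F l (n - 1) + a n * (gn n + gn (n - 1))));
          hn = (if s then (\<lambda>n. H l (n - 1) + b n * (gn n + gn (n - 1)))
                else (\<lambda>n. H l (n + 1) - b (n + 1) * (gn (n + 1) + gn n)))
      in L @ [(fn, gn, hn)])"

definition AL_hat_f :: "bool \<Rightarrow> seq \<Rightarrow> seq \<Rightarrow> nat \<Rightarrow> seq" where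
  "AL_hat_f s a b l = fst (AL_hat_list s a b l ! l)"
definition AL_hat_g :: "bool \<Rightarrow> seq \<Rightarrow> seq \<Rightarrow> nat \<Rightarrow> seq" where
  "AL_hat_g s a b l = fst (snd (AL_hat_list s a b l ! l))"
definition AL_hat_h :: "bool \<Rightarrow> seq \<Rightarrow> seq \<Rightarrow> nat \<Rightarrow> seq" where
  "AL_hat_h s a b l = snd (snd (AL_hat_list s a b l ! l))"

definition AL_f :: "bool \<Rightarrow> (nat \<Rightarrow> complex) \<Rightarrow> seq \<Rightarrow> seq \<Rightarrow> nat \<Rightarrow> seq" where
  "AL_f s c a b l = (\<lambda>n. \<Sum>k\<le>l. c (l - k) * AL_hat_f s a b k n)"
definition AL_g :: "bool \<Rightarrow> (nat \<Rightarrow> complex) \<Rightarrow> seq \<Rightarrow> seq \<Rightarrow> nat \<Rightarrow> seq" where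
  "AL_g s c a b l = (\<lambda>n. \<Sum>k\<le>l. c (l - k) * AL_hat_g s a b k n)"
definition AL_h :: "bool \<Rightarrow> (nat \<Rightarrow> complex) \<Rightarrow> seq \<Rightarrow> seq \<Rightarrow> nat \<Rightarrow> seq" where
  "AL_h s c a b l = (\<lambda>n. \<Sum>k\<le>l. c (l - k) * AL_hat_h s a b k n)"

text \<open>f_{r-1} and h_{r-1} with the convention f_{-1} = h_{-1} = 0.\<close>
definition AL_fm1 :: "bool \<Rightarrow> (nat \<Rightarrow> complex) \<Rightarrow> seq \<Rightarrow> seq \<Rightarrow> nat \<Rightarrow> seq" where
  "AL_fm1 s c a b r = (if r = 0 then (\<lambda>n. 0) else AL_f s c a b (r - 1))"
definition AL_hm1 :: "bool \<Rightarrow> (nat \<Rightarrow> complex) \<Rightarrow> seq \<Rightarrow> seq \<Rightarrow> nat \<Rightarrow> seq" where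
  "AL_hm1 s c a b r = (if r = 0 then (\<lambda>n. 0) else AL_h s c a b (r - 1))"

definition AL_solution ::
  "nat \<Rightarrow> nat \<Rightarrow> (nat \<Rightarrow> complex) \<Rightarrow> (nat \<Rightarrow> complex) \<Rightarrow> real set
     \<Rightarrow> (real \<Rightarrow> seq) \<Rightarrow> (real \<Rightarrow> seq) \<Rightarrow> bool" where
  "AL_solution rm rp cm cp I \<alpha> \<beta> \<longleftrightarrow>
     (\<exists>M. \<forall>t\<in>I. \<forall>n. norm (\<alpha> t n) \<le> M \<and> norm (\<beta> t n) \<le> M) \<and>
     (\<exists>\<alpha>' \<beta>'. \<forall>n.
        continuous_on I (\<lambda>t. \<alpha>' t n) \<and> continuous_on I (\<lambda>t. \<beta>' t n) \<and>
        (\<forall>t\<in>I.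
           ((\<lambda>s. \<alpha> s n) has_vector_derivative \<alpha>' t n) (at t) \<and>
           ((\<lambda>s. \<beta> s n) has_vector_derivative \<beta>' t n) (at t) \<and>
           - \<i> * \<alpha>' t n
             - \<alpha> t n * (AL_g True cp (\<alpha> t) (\<beta> t) rp n + AL_g False cm (\<alpha> t) (\<beta> t) rm (n - 1))
             + AL_fm1 True cp (\<alpha> t) (\<beta> t) rp n - AL_fm1 False cm (\<alpha> t) (\<beta> t) rm (n - 1) = 0 \<and>
           - \<i> * \<beta>' t n
             + \<beta> t n * (AL_g True cp (\<alpha> t) (\<beta> t) rp (n - 1) + AL_g False cm (\<alpha> t) (\<beta> t) rm n)
             - AL_hm1 False cm (\<alpha> t) (\<beta> t) rm n + AL_hm1 True cp (\<alpha> t) (\<beta> t) rp (n - 1) = 0))"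

definition wnorm_finite :: "(int \<Rightarrow> real) \<Rightarrow> ereal \<Rightarrow> seq \<Rightarrow> seq \<Rightarrow> bool" where
  "wnorm_finite w p a b =
     (if p = \<infinity> then bdd_above (range (\<lambda>n. w n * (norm (a n) + norm (b n))))
      else (\<lambda>n. w n * (norm (a n) powr real_of_ereal p + norm (b n) powr real_of_ereal p))
              summable_on UNIV)"

end

theory Submission
  imports Defs
begin

text \<open>The difference (x, y) between a solution and the glued solution satisfies a lattice
  differential inequality |x'_n|, |y'_n| \<le> L \<Sum>_{|j| \<le> R} (|x_{n+j}| + |y_{n+j}|) + g_n:
  every coefficient of the hierarchy is a local, locally Lipschitz function of (alpha, beta),
  and the finitely supported g collects the mismatch of the two glued solutions at the
  junction n = 0. Smoothing the profile at t0 to W_n = sup_k q^|n-k| (|x_k(t0)| + |y_k(t0)| + g_k),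
  with q small against the growth of the weight, gives a supersolution that is still finite in
  the weighted norm, and a Gronwall argument keeps |x_n(t)| + |y_n(t)| below e^(lam |t - t0|) W_n.\<close>

section \<open>Local operators on pairs of sequences\<close>

definition window_dist :: "nat \<Rightarrow> seq \<Rightarrow> seq \<Rightarrow> seq \<Rightarrow> seq \<Rightarrow> int \<Rightarrow> real" where
  "window_dist R a b a' b' n =
     (\<Sum>j\<in>{- int R..int R}. norm (a (n + j) - a' (n + j)) + norm (b (n + j) - b' (n + j)))"

definition seqs_bounded :: "real \<Rightarrow> seq \<Rightarrow> seq \<Rightarrow> seq \<Rightarrow> seq \<Rightarrow> bool" where
  "seqs_bounded M a b a' b' \<longleftrightarrow>
     (\<forall>n. norm (a n) \<le> M \<and> norm (b n) \<le> M \<and> norm (a' n) \<le> M \<and> norm (b' n) \<le> M)"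

definition local_of_radius :: "nat \<Rightarrow> (seq \<Rightarrow> seq \<Rightarrow> seq) \<Rightarrow> bool" where
  "local_of_radius R F \<longleftrightarrow> (\<forall>M. \<exists>C B. \<forall>a b a' b' n. seqs_bounded M a b a' b' \<longrightarrow>
      norm (F a b n) \<le> B \<and> norm (F a b n - F a' b' n) \<le> C * window_dist R a b a' b' n)"

definition local_op :: "(seq \<Rightarrow> seq \<Rightarrow> seq) \<Rightarrow> bool" where
  "local_op F \<longleftrightarrow> (\<exists>R. local_of_radius R F)"

lemma seqs_bounded_swap: "seqs_bounded M a b a' b' \<Longrightarrow> seqs_bounded M a' b' a b"
  unfolding seqs_bounded_def by blast

lemma local_of_radiusD:
  assumes "local_of_radius R F"
  shows "\<exists>C B. \<forall>a b a' b' n. seqs_bounded M a b a' b' \<longrightarrow>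
      norm (F a b n) \<le> B \<and> norm (F a b n - F a' b' n) \<le> C * window_dist R a b a' b' n"
  using assms unfolding local_of_radius_def by blast

lemma local_of_radiusI:
  assumes "\<And>M. \<exists>C B. \<forall>a b a' b' n. seqs_bounded M a b a' b' \<longrightarrow>
      norm (F a b n) \<le> B \<and> norm (F a b n - F a' b' n) \<le> C * window_dist R a b a' b' n"
  shows "local_of_radius R F"
  using assms unfolding local_of_radius_def by blast

lemma window_dist_nonneg: "0 \<le> window_dist R a b a' b' n"
  unfolding window_dist_def by (intro sum_nonneg) auto

lemma window_dist_mono: "R \<le> R' \<Longrightarrow> window_dist R a b a' b' n \<le> window_dist R' a b a' b' n"
  unfolding window_dist_def by (intro sum_mono2) auto

lemma window_dist_shift: "window_dist R a b a' b' (n + k) \<le> window_dist (R + nat \<bar>k\<bar>) a b a' b' n"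
proof -
  let ?d = "\<lambda>i. norm (a (n + i) - a' (n + i)) + norm (b (n + i) - b' (n + i))"
  have "window_dist R a b a' b' (n + k) = (\<Sum>j\<in>{- int R..int R}. ?d (j + k))"
    unfolding window_dist_def by (simp add: ac_simps)
  also have "\<dots> = (\<Sum>i\<in>(\<lambda>j. j + k) ` {- int R..int R}. ?d i)"
    by (subst sum.reindex) (auto simp: inj_on_def)
  also have "\<dots> \<le> window_dist (R + nat \<bar>k\<bar>) a b a' b' n"
    unfolding window_dist_def by (intro sum_mono2) auto
  finally show ?thesis .
qed

lemma window_dist_ge: "norm (a n - a' n) + norm (b n - b' n) \<le> window_dist R a b a' b' n"
  using member_le_sum[of 0 "{- int R..int R}"
      "\<lambda>j. norm (a (n + j) - a' (n + j)) + norm (b (n + j) - b' (n + j))"]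
  unfolding window_dist_def by simp

lemma local_of_radius_mono:
  assumes F: "local_of_radius R F" and RR': "R \<le> R'"
  shows "local_of_radius R' F"
proof (rule local_of_radiusI)
  fix M
  obtain C B where CB: "\<And>a b a' b' n. seqs_bounded M a b a' b' \<Longrightarrow>
      norm (F a b n) \<le> B \<and> norm (F a b n - F a' b' n) \<le> C * window_dist R a b a' b' n"
    using local_of_radiusD[OF F, of M] by blast
  show "\<exists>C B. \<forall>a b a' b' n. seqs_bounded M a b a' b' \<longrightarrow>
      norm (F a b n) \<le> B \<and> norm (F a b n - F a' b' n) \<le> C * window_dist R' a b a' b' n"
  proof (rule exI[of _ "max C 0"], rule exI[of _ B], intro allI impI conjI)
    fix a b a' b' n
    assume ab: "seqs_bounded M a b a' b'"
    show "norm (F a b n) \<le> B" using CB[OF ab] by blast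
    have "norm (F a b n - F a' b' n) \<le> C * window_dist R a b a' b' n" using CB[OF ab] by blast
    also have "\<dots> \<le> max C 0 * window_dist R' a b a' b' n"
      using window_dist_mono[OF RR'] window_dist_nonneg by (intro mult_mono) auto
    finally show "norm (F a b n - F a' b' n) \<le> max C 0 * window_dist R' a b a' b' n" .
  qed
qed

lemma local_of_radius_const: "local_of_radius R (\<lambda>a b n. c)"
  by (rule local_of_radiusI, rule exI[of _ 0], rule exI[of _ "norm c"]) (auto simp: window_dist_nonneg)

lemma local_of_radius_fst: "local_of_radius R (\<lambda>a b. a)"
proof (rule local_of_radiusI)
  fix M
  have "norm (a n - a' n) \<le> window_dist R a b a' b' n" for a b a' b' n
    using window_dist_ge[of a n a' b b' R] norm_ge_zero[of "b n - b' n"] by linarith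
  note d = this
  show "\<exists>C B. \<forall>a b a' b' n. seqs_bounded M a b a' b' \<longrightarrow>
      norm (a n) \<le> B \<and> norm (a n - a' n) \<le> C * window_dist R a b a' b' n"
    by (rule exI[of _ "1::real"], rule exI[of _ M]) (simp add: d seqs_bounded_def)
qed

lemma local_of_radius_snd: "local_of_radius R (\<lambda>a b. b)"
proof (rule local_of_radiusI)
  fix M
  have "norm (b n - b' n) \<le> window_dist R a b a' b' n" for a b a' b' n
    using window_dist_ge[of a n a' b b' R] norm_ge_zero[of "a n - a' n"] by linarith
  note d = this
  show "\<exists>C B. \<forall>a b a' b' n. seqs_bounded M a b a' b' \<longrightarrow>
      norm (b n) \<le> B \<and> norm (b n - b' n) \<le> C * window_dist R a b a' b' n"
    by (rule exI[of _ "1::real"], rule exI[of _ M]) (simp add: d seqs_bounded_def)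
qed

lemma local_of_radius_add:
  assumes F: "local_of_radius R F" and G: "local_of_radius R G"
  shows "local_of_radius R (\<lambda>a b n. F a b n + G a b n)"
proof (rule local_of_radiusI)
  fix M
  obtain C1 B1 where f: "\<And>a b a' b' n. seqs_bounded M a b a' b' \<Longrightarrow>
      norm (F a b n) \<le> B1 \<and> norm (F a b n - F a' b' n) \<le> C1 * window_dist R a b a' b' n"
    using local_of_radiusD[OF F, of M] by blast
  obtain C2 B2 where g: "\<And>a b a' b' n. seqs_bounded M a b a' b' \<Longrightarrow>
      norm (G a b n) \<le> B2 \<and> norm (G a b n - G a' b' n) \<le> C2 * window_dist R a b a' b' n"
    using local_of_radiusD[OF G, of M] by blast
  have "norm (F a b n + G a b n) \<le> B1 + B2 \<and>
        norm (F a b n + G a b n - (F a' b' n + G a' b' n)) \<le> (C1 + C2) * window_dist R a b a' b' n"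
    if "seqs_bounded M a b a' b'" for a b a' b' n
  proof -
    have "norm (F a b n + G a b n - (F a' b' n + G a' b' n))
          \<le> norm (F a b n - F a' b' n) + norm (G a b n - G a' b' n)"
      by (metis add_diff_add norm_triangle_ineq)
    then show ?thesis
      using f[OF that, of n] g[OF that, of n] norm_triangle_ineq[of "F a b n" "G a b n"]
      by (simp add: distrib_right)
  qed
  then show "\<exists>C B. \<forall>a b a' b' n. seqs_bounded M a b a' b' \<longrightarrow>
      norm (F a b n + G a b n) \<le> B \<and>
      norm (F a b n + G a b n - (F a' b' n + G a' b' n)) \<le> C * window_dist R a b a' b' n"
    by blast
qed

lemma local_of_radius_mult:
  assumes F: "local_of_radius R F" and G: "local_of_radius R G"
  shows "local_of_radius R (\<lambda>a b n. F a b n * G a b n)"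
proof (rule local_of_radiusI)
  fix M
  obtain C1 B1 where f: "\<And>a b a' b' n. seqs_bounded M a b a' b' \<Longrightarrow>
      norm (F a b n) \<le> B1 \<and> norm (F a b n - F a' b' n) \<le> C1 * window_dist R a b a' b' n"
    using local_of_radiusD[OF F, of M] by blast
  obtain C2 B2 where g: "\<And>a b a' b' n. seqs_bounded M a b a' b' \<Longrightarrow>
      norm (G a b n) \<le> B2 \<and> norm (G a b n - G a' b' n) \<le> C2 * window_dist R a b a' b' n"
    using local_of_radiusD[OF G, of M] by blast
  have "norm (F a b n * G a b n) \<le> B1 * B2 \<and>
        norm (F a b n * G a b n - F a' b' n * G a' b' n)
          \<le> (B1 * C2 + B2 * C1) * window_dist R a b a' b' n"
    if ab: "seqs_bounded M a b a' b'" for a b a' b' n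
  proof -
    note f1 = f[OF ab, of n] and g1 = g[OF ab, of n]
    have g2: "norm (G a' b' n) \<le> B2" using g[OF seqs_bounded_swap[OF ab]] by blast
    have "0 \<le> B1" "0 \<le> B2" using f1 g1 norm_ge_zero order_trans by blast+
    have "F a b n * G a b n - F a' b' n * G a' b' n
          = F a b n * (G a b n - G a' b' n) + G a' b' n * (F a b n - F a' b' n)"
      by (simp add: algebra_simps)
    then have "norm (F a b n * G a b n - F a' b' n * G a' b' n)
        \<le> norm (F a b n) * norm (G a b n - G a' b' n) + norm (G a' b' n) * norm (F a b n - F a' b' n)"
      by (metis norm_mult norm_triangle_ineq)
    also have "\<dots> \<le> B1 * (C2 * window_dist R a b a' b' n) + B2 * (C1 * window_dist R a b a' b' n)"
      using f1 g1 g2 \<open>0 \<le> B1\<close> \<open>0 \<le> B2\<close> by (intro add_mono mult_mono) auto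
    finally show ?thesis
      using f1 g1 \<open>0 \<le> B1\<close> by (auto simp: norm_mult algebra_simps intro!: mult_mono)
  qed
  then show "\<exists>C B. \<forall>a b a' b' n. seqs_bounded M a b a' b' \<longrightarrow>
      norm (F a b n * G a b n) \<le> B \<and>
      norm (F a b n * G a b n - F a' b' n * G a' b' n) \<le> C * window_dist R a b a' b' n"
    by blast
qed

lemma local_of_radius_shift:
  assumes F: "local_of_radius R F"
  shows "local_of_radius (R + nat \<bar>k\<bar>) (\<lambda>a b n. F a b (n + k))"
proof (rule local_of_radiusI)
  fix M
  obtain C B where f: "\<And>a b a' b' n. seqs_bounded M a b a' b' \<Longrightarrow>
      norm (F a b n) \<le> B \<and> norm (F a b n - F a' b' n) \<le> C * window_dist R a b a' b' n"
    using local_of_radiusD[OF F, of M] by blast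
  have "norm (F a b (n + k) - F a' b' (n + k)) \<le> max C 0 * window_dist (R + nat \<bar>k\<bar>) a b a' b' n"
    if "seqs_bounded M a b a' b'" for a b a' b' n
  proof -
    have "norm (F a b (n + k) - F a' b' (n + k)) \<le> C * window_dist R a b a' b' (n + k)"
      using f[OF that] by blast
    also have "\<dots> \<le> max C 0 * window_dist (R + nat \<bar>k\<bar>) a b a' b' n"
      using window_dist_shift window_dist_nonneg by (intro mult_mono) auto
    finally show ?thesis .
  qed
  then have "\<forall>a b a' b' n. seqs_bounded M a b a' b' \<longrightarrow> norm (F a b (n + k)) \<le> B \<and>
      norm (F a b (n + k) - F a' b' (n + k)) \<le> max C 0 * window_dist (R + nat \<bar>k\<bar>) a b a' b' n"
    using f by blast
  then show "\<exists>C B. \<forall>a b a' b' n. seqs_bounded M a b a' b' \<longrightarrow>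
      norm (F a b (n + k)) \<le> B \<and>
      norm (F a b (n + k) - F a' b' (n + k)) \<le> C * window_dist (R + nat \<bar>k\<bar>) a b a' b' n"
    by blast
qed

lemma local_op_common_radius:
  assumes "local_op F" "local_op G"
  obtains R where "local_of_radius R F" "local_of_radius R G"
proof -
  obtain R1 R2 where "local_of_radius R1 F" "local_of_radius R2 G"
    using assms unfolding local_op_def by blast
  then show ?thesis
    using that local_of_radius_mono[of R1 F "max R1 R2"] local_of_radius_mono[of R2 G "max R1 R2"]
    by simp
qed

lemma local_op_const: "local_op (\<lambda>a b n. c)"
  unfolding local_op_def using local_of_radius_const by blast

lemma local_op_fst: "local_op (\<lambda>a b n. a (n + k))"
  unfolding local_op_def using local_of_radius_shift[OF local_of_radius_fst] by blast

lemma local_op_snd: "local_op (\<lambda>a b n. b (n + k))"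
  unfolding local_op_def using local_of_radius_shift[OF local_of_radius_snd] by blast

lemma local_op_add: "local_op F \<Longrightarrow> local_op G \<Longrightarrow> local_op (\<lambda>a b n. F a b n + G a b n)"
  by (erule local_op_common_radius, assumption) (auto simp: local_op_def intro: local_of_radius_add)

lemma local_op_mult: "local_op F \<Longrightarrow> local_op G \<Longrightarrow> local_op (\<lambda>a b n. F a b n * G a b n)"
  by (erule local_op_common_radius, assumption) (auto simp: local_op_def intro: local_of_radius_mult)

lemma local_op_shift: "local_op F \<Longrightarrow> local_op (\<lambda>a b n. F a b (n + k))"
  unfolding local_op_def using local_of_radius_shift by blast

lemma local_op_shift_minus: "local_op F \<Longrightarrow> local_op (\<lambda>a b n. F a b (n - k))"
  using local_op_shift[of F "- k"] by simp

lemma local_op_cmult: "local_op F \<Longrightarrow> local_op (\<lambda>a b n. c * F a b n)"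
  using local_op_mult[OF local_op_const[of c]] by simp

lemma local_op_uminus: "local_op F \<Longrightarrow> local_op (\<lambda>a b n. - F a b n)"
  using local_op_cmult[of F "-1"] by simp

lemma local_op_diff: "local_op F \<Longrightarrow> local_op G \<Longrightarrow> local_op (\<lambda>a b n. F a b n - G a b n)"
  using local_op_add[of F "\<lambda>a b n. - G a b n"] local_op_uminus[of G] by simp

lemma local_op_if: "local_op F \<Longrightarrow> local_op G \<Longrightarrow> local_op (\<lambda>a b. if P then F a b else G a b)"
  by (cases P) simp_all

lemma local_op_sum:
  assumes "finite I" "\<And>i. i \<in> I \<Longrightarrow> local_op (F i)"
  shows "local_op (\<lambda>a b n. \<Sum>i\<in>I. F i a b n)"
  using assms
proof (induction I rule: finite_induct)
  case empty
  then show ?case using local_op_const[of 0] by simp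
next
  case (insert x I)
  then show ?case using local_op_add[of "F x" "\<lambda>a b n. \<Sum>i\<in>I. F i a b n"] by simp
qed

section \<open>Locality of the Ablowitz--Ladik hierarchy\<close>

lemma AL_hat_list_Suc_snoc: "\<exists>x. AL_hat_list s a b (Suc l) = AL_hat_list s a b l @ [x]"
  by (simp only: AL_hat_list.simps Let_def) (rule exI, rule refl)

lemma length_AL_hat_list: "length (AL_hat_list s a b l) = Suc l"
proof (induction l)
  case (Suc l)
  obtain x where "AL_hat_list s a b (Suc l) = AL_hat_list s a b l @ [x]"
    using AL_hat_list_Suc_snoc by blast
  with Suc.IH show ?case by simp
qed simp

lemma nth_AL_hat_list: "k \<le> l \<Longrightarrow> AL_hat_list s a b l ! k = AL_hat_list s a b k ! k"
proof (induction l)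
  case 0
  then show ?case by simp
next
  case (Suc l)
  obtain x where x: "AL_hat_list s a b (Suc l) = AL_hat_list s a b l @ [x]"
    using AL_hat_list_Suc_snoc by blast
  show ?case
  proof (cases "k \<le> l")
    case True
    then show ?thesis using Suc.IH unfolding x by (simp add: nth_append length_AL_hat_list)
  next
    case False
    then show ?thesis using Suc.prems by (simp add: le_Suc_eq)
  qed
qed

lemma AL_hat_components_nth:
  assumes "k \<le> l"
  shows "fst (AL_hat_list s a b l ! k) = AL_hat_f s a b k"
    and "fst (snd (AL_hat_list s a b l ! k)) = AL_hat_g s a b k"
    and "snd (snd (AL_hat_list s a b l ! k)) = AL_hat_h s a b k"
  unfolding AL_hat_f_def AL_hat_g_def AL_hat_h_def nth_AL_hat_list[OF assms] by simp_all

lemma AL_hat_0: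
  "AL_hat_f s a b 0 = (if s then (\<lambda>n. - a (n + 1)) else a)"
  "AL_hat_g s a b 0 = (\<lambda>n. 1/2)"
  "AL_hat_h s a b 0 = (if s then b else (\<lambda>n. - b (n + 1)))"
  by (simp_all add: AL_hat_f_def AL_hat_g_def AL_hat_h_def)

lemma AL_hat_g_Suc: "AL_hat_g s a b (Suc l) = (\<lambda>n.
     (\<Sum>k\<le>l. AL_hat_f s a b (l - k) n * AL_hat_h s a b k n)
     - (\<Sum>k\<in>{1..l}. AL_hat_g s a b (l + 1 - k) n * AL_hat_g s a b k n))"
  unfolding AL_hat_g_def[of s a b "Suc l"]
  by (simp add: Let_def nth_append length_AL_hat_list AL_hat_components_nth le_diff_conv
      cong: sum.cong_simp del: AL_hat_list.simps(1))

lemma AL_hat_f_Suc: "AL_hat_f s a b (Suc l) = (if s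
     then (\<lambda>n. AL_hat_f s a b l (n + 1) - a (n + 1) * (AL_hat_g s a b (Suc l) (n + 1) + AL_hat_g s a b (Suc l) n))
     else (\<lambda>n. AL_hat_f s a b l (n - 1) + a n * (AL_hat_g s a b (Suc l) n + AL_hat_g s a b (Suc l) (n - 1))))"
  unfolding AL_hat_f_def[of s a b "Suc l"] AL_hat_g_Suc
  by (simp add: Let_def nth_append length_AL_hat_list AL_hat_components_nth le_diff_conv
      cong: sum.cong_simp del: AL_hat_list.simps(1))

lemma AL_hat_h_Suc: "AL_hat_h s a b (Suc l) = (if s
     then (\<lambda>n. AL_hat_h s a b l (n - 1) + b n * (AL_hat_g s a b (Suc l) n + AL_hat_g s a b (Suc l) (n - 1)))
     else (\<lambda>n. AL_hat_h s a b l (n + 1) - b (n + 1) * (AL_hat_g s a b (Suc l) (n + 1) + AL_hat_g s a b (Suc l) n)))"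
  unfolding AL_hat_h_def[of s a b "Suc l"] AL_hat_g_Suc
  by (simp add: Let_def nth_append length_AL_hat_list AL_hat_components_nth le_diff_conv
      cong: sum.cong_simp del: AL_hat_list.simps(1))

lemma local_op_AL_hat_upto:
  "\<forall>k\<le>l. local_op (\<lambda>a b. AL_hat_f s a b k) \<and> local_op (\<lambda>a b. AL_hat_g s a b k)
     \<and> local_op (\<lambda>a b. AL_hat_h s a b k)"
proof (induction l)
  case 0
  have "local_op (\<lambda>a b n. a (n + 0))" "local_op (\<lambda>a b n. b (n + 0))"
    by (rule local_op_fst local_op_snd)+
  then show ?case
    by (cases s) (auto simp: AL_hat_0 intro!: local_op_const local_op_fst local_op_snd local_op_uminus)
next
  case (Suc l)
  then have F: "local_op (\<lambda>a b n. AL_hat_f s a b k n)"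
        and G: "local_op (\<lambda>a b n. AL_hat_g s a b k n)"
        and H: "local_op (\<lambda>a b n. AL_hat_h s a b k n)" if "k \<le> l" for k
    using that by simp_all
  have G': "local_op (\<lambda>a b n. AL_hat_g s a b (Suc l) n)"
    unfolding AL_hat_g_Suc by (intro local_op_diff local_op_sum local_op_mult F G H) auto
  have a: "local_op (\<lambda>a b n. a n)" and b: "local_op (\<lambda>a b n. b n)"
    using local_op_fst[of 0] local_op_snd[of 0] by simp_all
  have "local_op (\<lambda>a b. AL_hat_f s a b (Suc l))" "local_op (\<lambda>a b. AL_hat_h s a b (Suc l))"
    unfolding AL_hat_f_Suc AL_hat_h_Suc
    by (intro local_op_if local_op_add local_op_diff local_op_mult local_op_shift local_op_shift_minus
        local_op_fst local_op_snd a b F[of l] H[of l] G' order_refl)+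
  with Suc.IH G' show ?case by (auto simp: le_Suc_eq)
qed

lemma local_op_AL_coefficients:
  "local_op (\<lambda>a b. AL_g s c a b l)" "local_op (\<lambda>a b. AL_fm1 s c a b r)"
  "local_op (\<lambda>a b. AL_hm1 s c a b r)"
proof -
  have hat: "local_op (\<lambda>a b n. AL_hat_f s a b k n)" "local_op (\<lambda>a b n. AL_hat_g s a b k n)"
    "local_op (\<lambda>a b n. AL_hat_h s a b k n)" for k
    using local_op_AL_hat_upto[of k s] by auto
  have fh: "local_op (\<lambda>a b. AL_f s c a b l)" "local_op (\<lambda>a b. AL_h s c a b l)" for l
    unfolding AL_f_def AL_h_def by (intro local_op_sum local_op_cmult hat finite_atMost)+
  show "local_op (\<lambda>a b. AL_fm1 s c a b r)" "local_op (\<lambda>a b. AL_hm1 s c a b r)"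
    unfolding AL_fm1_def AL_hm1_def by (intro local_op_if local_op_const fh)+
  show "local_op (\<lambda>a b. AL_g s c a b l)"
    unfolding AL_g_def by (intro local_op_sum local_op_cmult hat finite_atMost)
qed

text \<open>The equation AL_r(alpha, beta) = 0 solved for the time derivatives.\<close>

definition AL_rhs_alpha :: "nat \<Rightarrow> nat \<Rightarrow> (nat \<Rightarrow> complex) \<Rightarrow> (nat \<Rightarrow> complex) \<Rightarrow> seq \<Rightarrow> seq \<Rightarrow> seq" where
  "AL_rhs_alpha rm rp cm cp a b n = \<i> * (a n * (AL_g True cp a b rp n + AL_g False cm a b rm (n - 1))
       - AL_fm1 True cp a b rp n + AL_fm1 False cm a b rm (n - 1))"

definition AL_rhs_beta :: "nat \<Rightarrow> nat \<Rightarrow> (nat \<Rightarrow> complex) \<Rightarrow> (nat \<Rightarrow> complex) \<Rightarrow> seq \<Rightarrow> seq \<Rightarrow> seq" where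
  "AL_rhs_beta rm rp cm cp a b n = \<i> * (- (b n * (AL_g True cp a b rp (n - 1) + AL_g False cm a b rm n))
       + AL_hm1 False cm a b rm n - AL_hm1 True cp a b rp (n - 1))"

lemma local_op_AL_rhs:
  "local_op (AL_rhs_alpha rm rp cm cp)" "local_op (AL_rhs_beta rm rp cm cp)"
proof -
  have a: "local_op (\<lambda>a b n. a n)" and b: "local_op (\<lambda>a b n. b n)"
    using local_op_fst[of 0] local_op_snd[of 0] by simp_all
  show "local_op (AL_rhs_alpha rm rp cm cp)" "local_op (AL_rhs_beta rm rp cm cp)"
    unfolding AL_rhs_alpha_def[abs_def] AL_rhs_beta_def[abs_def]
    by (intro local_op_cmult local_op_add local_op_diff local_op_uminus local_op_mult a b
        local_op_AL_coefficients local_op_AL_coefficients[THEN local_op_shift_minus])+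
qed

lemma minus_i_mult_eq_iff: "- \<i> * z = w \<longleftrightarrow> z = \<i> * w"
  by (auto simp: mult.assoc[symmetric])

lemma AL_solutionD:
  assumes "AL_solution rm rp cm cp I \<alpha> \<beta>"
  shows "\<exists>M \<alpha>' \<beta>'. \<forall>t\<in>I. \<forall>n. norm (\<alpha> t n) \<le> M \<and> norm (\<beta> t n) \<le> M \<and>
           ((\<lambda>s. \<alpha> s n) has_vector_derivative \<alpha>' t n) (at t) \<and>
           ((\<lambda>s. \<beta> s n) has_vector_derivative \<beta>' t n) (at t) \<and>
           \<alpha>' t n = AL_rhs_alpha rm rp cm cp (\<alpha> t) (\<beta> t) n \<and>
           \<beta>' t n = AL_rhs_beta rm rp cm cp (\<alpha> t) (\<beta> t) n"
proof -
  let ?G = "\<lambda>t n. AL_g True cp (\<alpha> t) (\<beta> t) rp n" and ?G' = "\<lambda>t n. AL_g False cm (\<alpha> t) (\<beta> t) rm n"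
  obtain M \<alpha>' \<beta>' where M: "\<forall>t\<in>I. \<forall>n. norm (\<alpha> t n) \<le> M \<and> norm (\<beta> t n) \<le> M"
    and D: "\<forall>n. \<forall>t\<in>I.
           ((\<lambda>s. \<alpha> s n) has_vector_derivative \<alpha>' t n) (at t) \<and>
           ((\<lambda>s. \<beta> s n) has_vector_derivative \<beta>' t n) (at t) \<and>
           - \<i> * \<alpha>' t n - \<alpha> t n * (?G t n + ?G' t (n - 1))
             + AL_fm1 True cp (\<alpha> t) (\<beta> t) rp n - AL_fm1 False cm (\<alpha> t) (\<beta> t) rm (n - 1) = 0 \<and>
           - \<i> * \<beta>' t n + \<beta> t n * (?G t (n - 1) + ?G' t n)
             - AL_hm1 False cm (\<alpha> t) (\<beta> t) rm n + AL_hm1 True cp (\<alpha> t) (\<beta> t) rp (n - 1) = 0"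
    using assms unfolding AL_solution_def by blast
  have "\<alpha>' t n = AL_rhs_alpha rm rp cm cp (\<alpha> t) (\<beta> t) n \<and> \<beta>' t n = AL_rhs_beta rm rp cm cp (\<alpha> t) (\<beta> t) n"
    if "t \<in> I" for t n
    using D that unfolding AL_rhs_alpha_def AL_rhs_beta_def minus_i_mult_eq_iff[symmetric]
    by (simp add: algebra_simps)
  with M D show ?thesis by blast
qed

section \<open>A Gronwall argument on the lattice\<close>

lemma norm_diff_le_by_comparison:
  fixes f f' :: "real \<Rightarrow> 'a::real_normed_vector"
  assumes "t0 \<le> s"
    and f': "\<And>r. r \<in> {t0..s} \<Longrightarrow> (f has_vector_derivative f' r) (at r)"
    and \<phi>': "\<And>r. r \<in> {t0..s} \<Longrightarrow> (\<phi> has_vector_derivative \<phi>' r) (at r)"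
    and le: "\<And>r. t0 < r \<Longrightarrow> r < s \<Longrightarrow> norm (f' r) \<le> \<phi>' r"
  shows "norm (f s - f t0) \<le> \<phi> s - \<phi> t0"
proof (cases "t0 = s")
  case False
  then have "t0 < s" using \<open>t0 \<le> s\<close> by simp
  moreover have "continuous_on {t0..s} f" "continuous_on {t0..s} \<phi>"
    by (rule continuous_at_imp_continuous_on, use f' \<phi>' in \<open>blast intro: has_vector_derivative_continuous\<close>)+
  ultimately show ?thesis
    using f' \<phi>' le by (intro differentiable_bound_general[where f'=f' and \<phi>'=\<phi>']) auto
qed simp

lemma power_over_fact_tendsto_0: "(\<lambda>m. (c::real) ^ m / fact m) \<longlonglongrightarrow> 0"
  using summable_LIMSEQ_zero[OF summable_exp_generic[of c]] by (simp add: divide_inverse_commute)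

lemma has_vector_derivative_reflect:
  assumes "(X has_vector_derivative D) (at (2 * t0 - s))"
  shows "((\<lambda>s. X (2 * t0 - s)) has_vector_derivative - D) (at s)"
proof -
  have "((\<lambda>s. 2 * t0 - s) has_vector_derivative -1) (at s)"
    by (auto intro!: derivative_eq_intros simp: has_real_derivative_iff_has_vector_derivative[symmetric])
  from vector_diff_chain_at[OF this assms] show ?thesis by (simp add: o_def)
qed

lemma picard_majorant_has_derivative:
  "((\<lambda>r. exp (lam * (r - t0)) * W + Mu * ((Lam * (r - t0)) ^ Suc m / fact (Suc m))) has_real_derivative
     lam * exp (lam * (r - t0)) * W + Mu * (Lam * ((Lam * (r - t0)) ^ m / fact m))) (at r)"
proof -
  have "((\<lambda>r. exp (lam * (r - t0)) * W + Mu * ((Lam * (r - t0)) ^ Suc m / fact (Suc m))) has_real_derivative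
      exp (lam * (r - t0)) * (lam * (1 - 0)) * W
      + Mu * (real (Suc m) * (Lam * (r - t0)) ^ (Suc m - 1) * (Lam * (1 - 0)) / fact (Suc m))) (at r)"
    by (intro derivative_eq_intros refl | simp)+
  moreover have "Mu * (real (Suc m) * (Lam * (r - t0)) ^ (Suc m - 1) * (Lam * (1 - 0)) / fact (Suc m))
      = Mu * (Lam * ((Lam * (r - t0)) ^ m / fact m))"
    by simp
  ultimately show ?thesis by (simp only:) (simp add: algebra_simps)
qed

locale lattice_differential_inequality =
  fixes x y x' y' :: "real \<Rightarrow> int \<Rightarrow> complex" and J :: "real set" and t0 :: real
    and L Mu lam :: real and R :: nat and g W :: "int \<Rightarrow> real"
  assumes deriv_x: "\<And>s n. s \<in> J \<Longrightarrow> ((\<lambda>r. x r n) has_vector_derivative x' s n) (at s)"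
    and deriv_y: "\<And>s n. s \<in> J \<Longrightarrow> ((\<lambda>r. y r n) has_vector_derivative y' s n) (at s)"
    and bounded: "\<And>s n. s \<in> J \<Longrightarrow> norm (x s n) + norm (y s n) \<le> Mu"
    and deriv_x_le: "\<And>s n. s \<in> J \<Longrightarrow>
      norm (x' s n) \<le> L * (\<Sum>j\<in>{-int R..int R}. norm (x s (n + j)) + norm (y s (n + j))) + g n"
    and deriv_y_le: "\<And>s n. s \<in> J \<Longrightarrow>
      norm (y' s n) \<le> L * (\<Sum>j\<in>{-int R..int R}. norm (x s (n + j)) + norm (y s (n + j))) + g n"
    and L_nonneg: "0 \<le> L" and g_nonneg: "\<And>n. 0 \<le> g n" and lam_nonneg: "0 \<le> lam"
    and init_le: "\<And>n. norm (x t0 n) + norm (y t0 n) \<le> W n"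
    and supersolution: "\<And>n. L * (\<Sum>j\<in>{-int R..int R}. W (n + j)) + g n \<le> lam / 2 * W n"
begin

lemma picard_window_bound:
  defines "Lam \<equiv> 2 * L * (2 * real R + 1)"
  assumes "t0 \<le> r"
    and prev: "\<And>n. norm (x r n) + norm (y r n) \<le> exp (lam * (r - t0)) * W n + Mu * ((Lam * (r - t0)) ^ m / fact m)"
  shows "L * (\<Sum>j\<in>{-int R..int R}. norm (x r (n + j)) + norm (y r (n + j))) + g n
    \<le> (lam * exp (lam * (r - t0)) * W n + Mu * (Lam * ((Lam * (r - t0)) ^ m / fact m))) / 2"
proof -
  define E where "E = exp (lam * (r - t0))"
  define c where "c = (Lam * (r - t0)) ^ m / fact m"
  have "1 \<le> E" unfolding E_def using lam_nonneg \<open>t0 \<le> r\<close> by simp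
  have "(\<Sum>j\<in>{-int R..int R}. norm (x r (n + j)) + norm (y r (n + j)))
      \<le> (\<Sum>j\<in>{-int R..int R}. E * W (n + j) + Mu * c)"
    using prev unfolding E_def c_def by (intro sum_mono) simp
  also have "\<dots> = E * (\<Sum>j\<in>{-int R..int R}. W (n + j)) + (2 * real R + 1) * (Mu * c)"
    by (simp add: sum.distrib sum_distrib_left)
  finally have "L * (\<Sum>j\<in>{-int R..int R}. norm (x r (n + j)) + norm (y r (n + j))) + g n
      \<le> L * (E * (\<Sum>j\<in>{-int R..int R}. W (n + j)) + (2 * real R + 1) * (Mu * c)) + E * g n"
    using L_nonneg g_nonneg[of n] \<open>1 \<le> E\<close> mult_right_mono[of 1 E "g n"]
    by (intro add_mono mult_left_mono) auto
  also have "\<dots> = E * (L * (\<Sum>j\<in>{-int R..int R}. W (n + j)) + g n) + Lam / 2 * (Mu * c)"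
    unfolding Lam_def by (simp add: algebra_simps)
  also have "\<dots> \<le> E * (lam / 2 * W n) + Lam / 2 * (Mu * c)"
    using supersolution[of n] \<open>1 \<le> E\<close> by (intro add_right_mono mult_left_mono) auto
  also have "\<dots> = (lam * E * W n + Mu * (Lam * c)) / 2" by (simp add: algebra_simps)
  finally show ?thesis unfolding E_def c_def .
qed

text \<open>Picard iteration: feeding a bound with error term Mu (Lam (s - t0))^m / m! into the
  differential inequality yields the error term of order m + 1.\<close>

lemma picard_bound:
  defines "Lam \<equiv> 2 * L * (2 * real R + 1)"
  assumes "t0 \<le> s" "{t0..s} \<subseteq> J"
  shows "norm (x s n) + norm (y s n) \<le> exp (lam * (s - t0)) * W n + Mu * ((Lam * (s - t0)) ^ m / fact m)"
  using assms(2-)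
proof (induction m arbitrary: s n)
  case 0
  have "0 \<le> W n" using init_le[of n] by (smt (verit) norm_ge_zero)
  moreover have "s \<in> J" using 0 by auto
  ultimately show ?case using bounded[of s n] by (simp add: add_increasing)
next
  case (Suc m)
  define \<phi> where "\<phi> r = (exp (lam * (r - t0)) * W n + Mu * ((Lam * (r - t0)) ^ Suc m / fact (Suc m))) / 2" for r
  define \<phi>' where "\<phi>' r = (lam * exp (lam * (r - t0)) * W n + Mu * (Lam * ((Lam * (r - t0)) ^ m / fact m))) / 2" for r
  have \<phi>_deriv: "(\<phi> has_vector_derivative \<phi>' r) (at r)" for r
    using DERIV_cdivide[OF picard_majorant_has_derivative[of lam t0 "W n" Mu Lam m r], where c=2]
    unfolding \<phi>_def[abs_def] \<phi>'_def by (simp add: has_real_derivative_iff_has_vector_derivative)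
  have "norm (x' r n) \<le> \<phi>' r \<and> norm (y' r n) \<le> \<phi>' r" if "t0 < r" "r < s" for r
  proof -
    have "r \<in> J" "{t0..r} \<subseteq> J" using that Suc.prems by auto
    with Suc.IH[of r] that have "L * (\<Sum>j\<in>{-int R..int R}. norm (x r (n + j)) + norm (y r (n + j))) + g n \<le> \<phi>' r"
      unfolding \<phi>'_def Lam_def by (intro picard_window_bound) auto
    with \<open>r \<in> J\<close> show ?thesis using deriv_x_le[of r n] deriv_y_le[of r n] by auto
  qed
  then have "norm (x s n - x t0 n) \<le> \<phi> s - \<phi> t0" "norm (y s n - y t0 n) \<le> \<phi> s - \<phi> t0"
    using Suc.prems by (auto intro!: norm_diff_le_by_comparison deriv_x deriv_y \<phi>_deriv)
  moreover have "\<phi> t0 = W n / 2" unfolding \<phi>_def by simp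
  ultimately have "norm (x s n) + norm (y s n) \<le> (norm (x t0 n) + norm (y t0 n)) + 2 * \<phi> s - W n"
    using norm_triangle_sub[of "x s n" "x t0 n"] norm_triangle_sub[of "y s n" "y t0 n"] by linarith
  moreover have "2 * \<phi> s = exp (lam * (s - t0)) * W n + Mu * ((Lam * (s - t0)) ^ Suc m / fact (Suc m))"
    unfolding \<phi>_def by simp
  ultimately show ?case using init_le[of n] by linarith
qed

lemma forward_bound:
  assumes "t0 \<le> s" "{t0..s} \<subseteq> J"
  shows "norm (x s n) + norm (y s n) \<le> exp (lam * (s - t0)) * W n"
proof -
  let ?B = "\<lambda>m. exp (lam * (s - t0)) * W n + Mu * ((2 * L * (2 * real R + 1) * (s - t0)) ^ m / fact m)"
  have "?B \<longlonglongrightarrow> exp (lam * (s - t0)) * W n + Mu * 0"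
    by (intro tendsto_intros power_over_fact_tendsto_0)
  then show ?thesis
    using picard_bound[OF assms] by (intro tendsto_lowerbound) auto
qed

lemma two_sided_bound:
  assumes "{min t0 t..max t0 t} \<subseteq> J"
  shows "norm (x t n) + norm (y t n) \<le> exp (lam * \<bar>t - t0\<bar>) * W n"
proof (cases "t0 \<le> t")
  case True
  then show ?thesis using forward_bound[of t] assms by simp
next
  case False
  let ?refl = "\<lambda>s. 2 * t0 - s"
  interpret backward: lattice_differential_inequality "\<lambda>s. x (?refl s)" "\<lambda>s. y (?refl s)"
    "\<lambda>s n. - x' (?refl s) n" "\<lambda>s n. - y' (?refl s) n" "?refl ` J" t0 L Mu lam R g W
    by (unfold_locales; (rule L_nonneg g_nonneg lam_nonneg supersolution)?;
        auto intro!: has_vector_derivative_reflect deriv_x deriv_y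
          simp: deriv_x_le deriv_y_le bounded init_le)
  have "{t0..?refl t} \<subseteq> ?refl ` J"
  proof
    fix s assume "s \<in> {t0..?refl t}"
    then have "?refl s \<in> J" using assms False by auto
    then show "s \<in> ?refl ` J" by (auto intro!: image_eqI[of s _ "?refl s"])
  qed
  then show ?thesis using backward.forward_bound[of "?refl t"] False by simp
qed

end

section \<open>Weighted norms and smoothing\<close>

lemma sum_half_power_le_2: "finite I \<Longrightarrow> (\<Sum>i\<in>I. (1/2::real) ^ i) \<le> 2"
  using sum_le_suminf[of "\<lambda>i. (1/2::real) ^ i" I] by (simp add: suminf_geometric)

lemma sum_half_power_dist_le_4:
  assumes "finite F"
  shows "(\<Sum>n\<in>F. (1/2::real) ^ nat \<bar>n - k\<bar>) \<le> 4"
proof -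
  have half: "(\<Sum>n\<in>F \<inter> A. (1/2::real) ^ nat \<bar>n - k\<bar>) \<le> 2" if "inj_on (\<lambda>n. nat \<bar>n - k\<bar>) A" for A
    using sum.reindex[OF inj_on_subset[OF that], of "F \<inter> A" "\<lambda>i. (1/2::real) ^ i"]
      sum_half_power_le_2[of "(\<lambda>n. nat \<bar>n - k\<bar>) ` (F \<inter> A)"] assms
    by (simp add: o_def)
  have "inj_on (\<lambda>n. nat \<bar>n - k\<bar>) {k..}" "inj_on (\<lambda>n. nat \<bar>n - k\<bar>) {..<k}"
    by (auto simp: inj_on_def)
  then have "(\<Sum>n\<in>F \<inter> {k..}. (1/2::real) ^ nat \<bar>n - k\<bar>) + (\<Sum>n\<in>F \<inter> {..<k}. (1/2) ^ nat \<bar>n - k\<bar>) \<le> 4"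
    using half by (smt (verit))
  moreover have "(\<Sum>n\<in>F. (1/2::real) ^ nat \<bar>n - k\<bar>)
      = (\<Sum>n\<in>F \<inter> {k..}. (1/2) ^ nat \<bar>n - k\<bar>) + (\<Sum>n\<in>F \<inter> {..<k}. (1/2) ^ nat \<bar>n - k\<bar>)"
    using assms by (subst sum.union_disjoint[symmetric]) (auto intro: sum.cong)
  ultimately show ?thesis by linarith
qed

lemma has_sum_finite_sum:
  fixes \<phi> :: "'i \<Rightarrow> 'a \<Rightarrow> 'b::topological_comm_monoid_add"
  assumes "finite F" "\<And>n. n \<in> F \<Longrightarrow> (\<phi> n has_sum s n) A"
  shows "((\<lambda>k. \<Sum>n\<in>F. \<phi> n k) has_sum (\<Sum>n\<in>F. s n)) A"
  using assms
proof (induction F rule: finite_induct)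
  case (insert x F)
  then show ?case using has_sum_add[where f="\<phi> x" and a="s x" and A=A] by simp
qed simp

text \<open>Convolution with the kernel 2^-|n| maps summable nonnegative sequences on the integers
  to summable ones, since the kernel has total mass at most 4.\<close>

lemma summable_on_half_power_convolution:
  fixes h :: "int \<Rightarrow> real"
  assumes h: "h summable_on UNIV" and h_nonneg: "\<And>k. 0 \<le> h k"
  shows "(\<lambda>n. infsum (\<lambda>k. (1/2) ^ nat \<bar>n - k\<bar> * h k) UNIV) summable_on UNIV"
proof (rule nonneg_bdd_above_summable_on)
  define \<phi> where "\<phi> n k = (1/2::real) ^ nat \<bar>n - k\<bar> * h k" for n k
  have \<phi>_summable: "\<phi> n summable_on UNIV" for n
    by (rule summable_on_comparison_test[OF h])
      (use h_nonneg in \<open>auto simp: \<phi>_def mult_left_le_one_le power_le_one\<close>)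
  show "0 \<le> infsum (\<phi> n) UNIV" for n
    using h_nonneg by (intro infsum_nonneg) (simp add: \<phi>_def)
  show "bdd_above (sum (\<lambda>n. infsum (\<phi> n) UNIV) ` {F. F \<subseteq> UNIV \<and> finite F})"
  proof (rule bdd_aboveI2)
    fix F :: "int set" assume "F \<in> {F. F \<subseteq> UNIV \<and> finite F}"
    then have F: "finite F" by simp
    have "(\<Sum>n\<in>F. infsum (\<phi> n) UNIV) = infsum (\<lambda>k. \<Sum>n\<in>F. \<phi> n k) UNIV"
      using has_sum_finite_sum[OF F, where \<phi>=\<phi> and s="\<lambda>n. infsum (\<phi> n) UNIV" and A=UNIV] \<phi>_summable
      by (simp add: infsumI)
    also have "\<dots> \<le> infsum (\<lambda>k. h k * 4) UNIV"
    proof (rule infsum_mono)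
      show "(\<lambda>k. \<Sum>n\<in>F. \<phi> n k) summable_on UNIV"
        using has_sum_finite_sum[OF F, where \<phi>=\<phi> and s="\<lambda>n. infsum (\<phi> n) UNIV" and A=UNIV] \<phi>_summable
        by (auto simp: summable_on_def)
      show "(\<lambda>k. h k * 4) summable_on UNIV" using summable_on_cmult_left[OF h] .
      show "(\<Sum>n\<in>F. \<phi> n k) \<le> h k * 4" for k
        using mult_left_mono[OF sum_half_power_dist_le_4[OF F, of k] h_nonneg[of k]]
        unfolding \<phi>_def sum_distrib_right[symmetric] by (simp add: mult.commute)
    qed
    finally show "(\<Sum>n\<in>F. infsum (\<phi> n) UNIV) \<le> infsum (\<lambda>k. h k * 4) UNIV" .
  qed
qed

definition weighted_finite :: "(int \<Rightarrow> real) \<Rightarrow> ereal \<Rightarrow> (int \<Rightarrow> real) \<Rightarrow> bool" where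
  "weighted_finite w p V =
     (if p = \<infinity> then bdd_above (range (\<lambda>n. w n * V n))
      else (\<lambda>n. w n * V n powr real_of_ereal p) summable_on UNIV)"

lemma powr_add_le:
  fixes a b P :: real
  assumes "0 \<le> a" "0 \<le> b" "0 < P"
  shows "(a + b) powr P \<le> 2 powr P * (a powr P + b powr P)"
proof -
  have "(a + b) powr P \<le> (2 * max a b) powr P" using assms by (intro powr_mono2) auto
  also have "\<dots> = 2 powr P * max a b powr P" by (rule powr_mult)
  also have "\<dots> \<le> 2 powr P * (a powr P + b powr P)" by (intro mult_left_mono) (auto simp: max_def)
  finally show ?thesis .
qed

lemma finite_exponent:
  assumes "p \<noteq> \<infinity>" "1 \<le> p"
  obtains P where "p = ereal P" "1 \<le> P"
  using assms by (cases p) auto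

lemma weighted_finite_mono:
  assumes V': "weighted_finite w p V'" and "1 \<le> p"
    and "\<And>n. 0 \<le> w n" "\<And>n. 0 \<le> V n" "\<And>n. V n \<le> V' n"
  shows "weighted_finite w p V"
proof (cases "p = \<infinity>")
  case True
  then obtain B where B: "\<And>n. w n * V' n \<le> B" using V' by (auto simp: weighted_finite_def bdd_above_def)
  have "w n * V n \<le> B" for n
    using mult_left_mono[of "V n" "V' n" "w n"] B[of n] assms by force
  then have "bdd_above (range (\<lambda>n. w n * V n))" by (rule bdd_aboveI2)
  with True show ?thesis by (simp add: weighted_finite_def)
next
  case False
  then obtain P where P: "p = ereal P" "1 \<le> P" using \<open>1 \<le> p\<close> by (rule finite_exponent)
  with V' have "(\<lambda>n. w n * V' n powr P) summable_on UNIV" by (simp add: weighted_finite_def)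
  then have "(\<lambda>n. w n * V n powr P) summable_on UNIV"
    by (rule summable_on_comparison_test) (use assms P in \<open>auto intro!: mult_left_mono powr_mono2\<close>)
  with P show ?thesis by (simp add: weighted_finite_def)
qed

lemma weighted_finite_cmult:
  assumes V: "weighted_finite w p V" and "0 \<le> c" "\<And>n. 0 \<le> V n"
  shows "weighted_finite w p (\<lambda>n. c * V n)"
proof (cases "p = \<infinity>")
  case True
  then obtain B where "\<And>n. w n * V n \<le> B" using V by (auto simp: weighted_finite_def bdd_above_def)
  then have "w n * (c * V n) \<le> c * B" for n
    using mult_left_mono[of "w n * V n" B c] \<open>0 \<le> c\<close> by (simp add: algebra_simps)
  then have "bdd_above (range (\<lambda>n. w n * (c * V n)))" by (rule bdd_aboveI2)
  with True show ?thesis by (simp add: weighted_finite_def)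
next
  case False
  let ?P = "real_of_ereal p"
  have "(\<lambda>n. (w n * V n powr ?P) * c powr ?P) summable_on UNIV"
    using V False by (intro summable_on_cmult_left) (simp add: weighted_finite_def)
  with False show ?thesis
    using assms by (simp add: weighted_finite_def powr_mult algebra_simps)
qed

lemma weighted_finite_add:
  assumes V: "weighted_finite w p V" and G: "weighted_finite w p G" and "1 \<le> p"
    and "\<And>n. 0 \<le> w n" "\<And>n. 0 \<le> V n" "\<And>n. 0 \<le> G n"
  shows "weighted_finite w p (\<lambda>n. V n + G n)"
proof (cases "p = \<infinity>")
  case True
  then obtain B1 B2 where "\<And>n. w n * V n \<le> B1" "\<And>n. w n * G n \<le> B2"
    using V G by (auto simp: weighted_finite_def bdd_above_def)
  then have "w n * (V n + G n) \<le> B1 + B2" for n by (simp add: distrib_left add_mono)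
  then have "bdd_above (range (\<lambda>n. w n * (V n + G n)))" by (rule bdd_aboveI2)
  with True show ?thesis by (simp add: weighted_finite_def)
next
  case False
  then obtain P where P: "p = ereal P" "1 \<le> P" using \<open>1 \<le> p\<close> by (rule finite_exponent)
  with V G have "(\<lambda>n. w n * V n powr P) summable_on UNIV" "(\<lambda>n. w n * G n powr P) summable_on UNIV"
    by (simp_all add: weighted_finite_def)
  then have "(\<lambda>n. (w n * V n powr P + w n * G n powr P) * 2 powr P) summable_on UNIV"
    by (intro summable_on_cmult_left summable_on_add)
  then have "(\<lambda>n. w n * (V n + G n) powr P) summable_on UNIV"
  proof (rule summable_on_comparison_test)
    show "w n * (V n + G n) powr P \<le> (w n * V n powr P + w n * G n powr P) * 2 powr P" for n
      using mult_left_mono[OF powr_add_le[of "V n" "G n" P] \<open>0 \<le> w n\<close>] assms P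
      by (simp add: algebra_simps)
  qed (use assms in auto)
  with P show ?thesis by (simp add: weighted_finite_def)
qed

lemma weighted_finite_finite_support:
  assumes "finite {n. V n \<noteq> 0}"
  shows "weighted_finite w p V"
proof (cases "p = \<infinity>")
  case True
  have "range (\<lambda>n. w n * V n) \<subseteq> insert 0 ((\<lambda>n. w n * V n) ` {n. V n \<noteq> 0})" by auto
  with assms True show ?thesis
    unfolding weighted_finite_def by (meson bdd_above_mono finite_imageI finite_insert bdd_above_finite)
next
  case False
  have "(\<lambda>n. w n * V n powr real_of_ereal p) summable_on {n. V n \<noteq> 0}"
    using assms by simp
  moreover have "(\<lambda>n. w n * V n powr real_of_ereal p) summable_on {n. V n \<noteq> 0}
      \<longleftrightarrow> (\<lambda>n. w n * V n powr real_of_ereal p) summable_on UNIV"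
    by (rule summable_on_cong_neutral) auto
  ultimately have "(\<lambda>n. w n * V n powr real_of_ereal p) summable_on UNIV" by simp
  with False show ?thesis by (simp add: weighted_finite_def)
qed

lemma wnorm_finite_iff_weighted_finite:
  assumes w: "\<And>n. 0 \<le> w n" and "1 \<le> p"
  shows "wnorm_finite w p a b \<longleftrightarrow> weighted_finite w p (\<lambda>n. norm (a n) + norm (b n))"
proof (cases "p = \<infinity>")
  case True
  then show ?thesis by (simp add: wnorm_finite_def weighted_finite_def)
next
  case False
  then obtain P where P: "p = ereal P" "1 \<le> P" using \<open>1 \<le> p\<close> by (rule finite_exponent)
  let ?S = "\<lambda>n. w n * (norm (a n) powr P + norm (b n) powr P)"
  let ?U = "\<lambda>n. w n * (norm (a n) + norm (b n)) powr P"
  have "?U n \<le> ?S n * 2 powr P" for n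
    using mult_left_mono[OF powr_add_le[of "norm (a n)" "norm (b n)" P] w[of n]] P
    by (simp add: algebra_simps)
  moreover have "?S n \<le> ?U n * 2" for n
  proof -
    have "norm (a n) powr P \<le> (norm (a n) + norm (b n)) powr P"
         "norm (b n) powr P \<le> (norm (a n) + norm (b n)) powr P"
      using P by (auto intro!: powr_mono2)
    then show ?thesis
      using mult_left_mono[of "norm (a n) powr P + norm (b n) powr P" "2 * (norm (a n) + norm (b n)) powr P" "w n"] w[of n]
      by (simp add: algebra_simps)
  qed
  moreover have "0 \<le> ?S n" "0 \<le> ?U n" for n using w[of n] by simp_all
  ultimately have "?S summable_on UNIV \<longleftrightarrow> ?U summable_on UNIV"
    using summable_on_comparison_test[OF summable_on_cmult_left[of ?S UNIV "2 powr P"], of ?U]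
      summable_on_comparison_test[OF summable_on_cmult_left[of ?U UNIV 2], of ?S]
    by blast
  with P show ?thesis by (simp add: wnorm_finite_def weighted_finite_def)
qed

text \<open>Smoothing makes a bounded profile comparable at neighbouring sites (discounted_sup_shift)
  while, for q small against the growth of the weight, keeping it weighted-finite.\<close>

definition discounted_sup :: "real \<Rightarrow> (int \<Rightarrow> real) \<Rightarrow> int \<Rightarrow> real" where
  "discounted_sup q f n = (SUP k. q ^ nat \<bar>n - k\<bar> * f k)"

locale discounted_sup_bounds =
  fixes q :: real and f :: "int \<Rightarrow> real" and Mf :: real
  assumes q_pos: "0 < q" and q_le_1: "q \<le> 1"
    and f_nonneg: "\<And>k. 0 \<le> f k" and f_le: "\<And>k. f k \<le> Mf"
begin

lemma bdd_above_discounted: "bdd_above (range (\<lambda>k. q ^ nat \<bar>n - k\<bar> * f k))"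
proof (rule bdd_aboveI2)
  fix k
  have "q ^ nat \<bar>n - k\<bar> * f k \<le> 1 * f k"
    using q_pos q_le_1 f_nonneg[of k] by (intro mult_right_mono power_le_one) auto
  then show "q ^ nat \<bar>n - k\<bar> * f k \<le> Mf" using f_le[of k] by simp
qed

lemma le_discounted_sup: "q ^ nat \<bar>n - k\<bar> * f k \<le> discounted_sup q f n"
  unfolding discounted_sup_def by (rule cSUP_upper[OF UNIV_I bdd_above_discounted])

lemma discounted_sup_least: "(\<And>k. q ^ nat \<bar>n - k\<bar> * f k \<le> X) \<Longrightarrow> discounted_sup q f n \<le> X"
  unfolding discounted_sup_def by (rule cSUP_least) auto

lemma self_le_discounted_sup: "f n \<le> discounted_sup q f n"
  using le_discounted_sup[of n n] by simp

lemma discounted_sup_nonneg: "0 \<le> discounted_sup q f n"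
  using self_le_discounted_sup[of n] f_nonneg[of n] by linarith

lemma discounted_sup_shift:
  assumes "\<bar>j\<bar> \<le> int R"
  shows "q ^ R * discounted_sup q f (n + j) \<le> discounted_sup q f n"
proof -
  have "discounted_sup q f (n + j) \<le> discounted_sup q f n / q ^ R"
  proof (rule discounted_sup_least)
    fix k
    have "q ^ R * (q ^ nat \<bar>n + j - k\<bar> * f k) = q ^ (R + nat \<bar>n + j - k\<bar>) * f k"
      by (simp add: power_add)
    also have "\<dots> \<le> q ^ nat \<bar>n - k\<bar> * f k"
      using assms q_pos q_le_1 f_nonneg[of k] by (intro mult_right_mono power_decreasing) auto
    also have "\<dots> \<le> discounted_sup q f n" by (rule le_discounted_sup)
    finally show "q ^ nat \<bar>n + j - k\<bar> * f k \<le> discounted_sup q f n / q ^ R"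
      using q_pos by (simp add: field_simps)
  qed
  then show ?thesis using q_pos by (simp add: field_simps)
qed

lemma discounted_sup_supersolution:
  assumes "0 \<le> L" and g_le: "\<And>n. g n \<le> f n"
  shows "L * (\<Sum>j\<in>{-int R..int R}. discounted_sup q f (n + j)) + g n
    \<le> (L * (2 * real R + 1) / q ^ R + 1) * discounted_sup q f n"
proof -
  have "(\<Sum>j\<in>{-int R..int R}. discounted_sup q f (n + j))
      \<le> (\<Sum>j\<in>{-int R..int R}. discounted_sup q f n / q ^ R)"
  proof (rule sum_mono)
    fix j :: int assume "j \<in> {-int R..int R}"
    then have "q ^ R * discounted_sup q f (n + j) \<le> discounted_sup q f n"
      by (intro discounted_sup_shift) auto
    then show "discounted_sup q f (n + j) \<le> discounted_sup q f n / q ^ R"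
      using q_pos by (simp add: field_simps)
  qed
  then have "L * (\<Sum>j\<in>{-int R..int R}. discounted_sup q f (n + j))
      \<le> L * (2 * real R + 1) / q ^ R * discounted_sup q f n"
    using assms(1) by (auto dest: mult_left_mono[of _ _ L])
  moreover have "g n \<le> discounted_sup q f n" using g_le[of n] self_le_discounted_sup[of n] by linarith
  ultimately show ?thesis by (simp add: algebra_simps)
qed

end
locale discounted_sup_weighted = discounted_sup_bounds +
  fixes w :: "int \<Rightarrow> real" and K :: real
  assumes w_pos: "\<And>k. 0 < w k" and w_growth: "\<And>n k. w n \<le> K ^ nat \<bar>n - k\<bar> * w k"
    and K_nonneg: "0 \<le> K" and K_q: "K * q \<le> 1/2"
begin

lemma weight_discount_le:
  assumes "0 \<le> z"
  shows "w n * (q ^ nat \<bar>n - k\<bar> * z) \<le> (1/2) ^ nat \<bar>n - k\<bar> * (w k * z)"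
proof -
  let ?d = "nat \<bar>n - k\<bar>"
  have "w n * (q ^ ?d * z) \<le> (K ^ ?d * w k) * (q ^ ?d * z)"
    using w_growth[of n k] q_pos assms by (intro mult_right_mono) auto
  also have "\<dots> = (K * q) ^ ?d * (w k * z)" by (simp add: power_mult_distrib algebra_simps)
  also have "\<dots> \<le> (1/2) ^ ?d * (w k * z)"
    using K_q K_nonneg q_pos w_pos[of k] assms by (intro mult_right_mono power_mono) auto
  finally show ?thesis .
qed

lemma weighted_discounted_sup_le:
  assumes B: "\<And>k. w k * f k \<le> B"
  shows "w n * discounted_sup q f n \<le> B"
proof -
  have "discounted_sup q f n \<le> B / w n"
  proof (rule discounted_sup_least)
    fix k
    have "w n * (q ^ nat \<bar>n - k\<bar> * f k) \<le> (1/2) ^ nat \<bar>n - k\<bar> * (w k * f k)"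
      using weight_discount_le f_nonneg by blast
    also have "\<dots> \<le> 1 * B"
      using B[of k] w_pos[of k] f_nonneg[of k] by (intro mult_mono power_le_one) auto
    finally show "q ^ nat \<bar>n - k\<bar> * f k \<le> B / w n" using w_pos[of n] by (simp add: field_simps)
  qed
  then show ?thesis using w_pos[of n] by (simp add: field_simps)
qed

lemma weighted_powr_discounted_sup_le:
  fixes P :: real
  defines "h \<equiv> \<lambda>k. w k * f k powr P"
  assumes P: "1 \<le> P" and h: "h summable_on UNIV"
  shows "w n * discounted_sup q f n powr P \<le> infsum (\<lambda>k. (1/2) ^ nat \<bar>n - k\<bar> * h k) UNIV"
    (is "_ \<le> ?Y")
proof -
  have h_nonneg: "0 \<le> h k" for k unfolding h_def using w_pos[of k] by simp
  have le_Y: "(1/2) ^ nat \<bar>n - k\<bar> * h k \<le> ?Y" for k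
  proof -
    have "(\<lambda>k. (1/2) ^ nat \<bar>n - k\<bar> * h k) summable_on UNIV"
      by (rule summable_on_comparison_test[OF h])
        (use h_nonneg in \<open>auto simp: mult_left_le_one_le power_le_one\<close>)
    then have "sum (\<lambda>k. (1/2) ^ nat \<bar>n - k\<bar> * h k) {k} \<le> ?Y"
      by (rule finite_sum_le_infsum) (simp_all add: h_nonneg)
    then show ?thesis by simp
  qed
  have "discounted_sup q f n \<le> (?Y / w n) powr (1/P)"
  proof (rule discounted_sup_least)
    fix k
    let ?d = "nat \<bar>n - k\<bar>"
    have qd: "0 \<le> q ^ ?d" "q ^ ?d \<le> 1" using q_pos q_le_1 by (auto simp: power_le_one)
    have "(q ^ ?d) powr P \<le> (q ^ ?d) powr 1" using qd P by (intro powr_mono') auto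
    then have "(q ^ ?d * f k) powr P \<le> q ^ ?d * f k powr P"
      using qd by (simp add: powr_mult mult_right_mono)
    then have "w n * (q ^ ?d * f k) powr P \<le> w n * (q ^ ?d * f k powr P)"
      using w_pos[of n] by (intro mult_left_mono) auto
    also have "\<dots> \<le> (1/2) ^ ?d * h k" unfolding h_def by (rule weight_discount_le) simp
    also have "\<dots> \<le> ?Y" by (rule le_Y)
    finally have le: "(q ^ ?d * f k) powr P \<le> ?Y / w n"
      using w_pos[of n] by (simp add: field_simps)
    have "q ^ ?d * f k = ((q ^ ?d * f k) powr P) powr (1/P)"
      using qd f_nonneg[of k] P by (simp add: powr_powr)
    also have "\<dots> \<le> (?Y / w n) powr (1/P)"
      using le P by (intro powr_mono2) auto
    finally show "q ^ ?d * f k \<le> (?Y / w n) powr (1/P)" .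
  qed
  then have "discounted_sup q f n powr P \<le> ((?Y / w n) powr (1/P)) powr P"
    using discounted_sup_nonneg[of n] P by (intro powr_mono2) auto
  also have "\<dots> = ?Y / w n"
    using P le_Y[of n] h_nonneg[of n] w_pos[of n] by (simp add: powr_powr)
  finally show ?thesis using w_pos[of n] by (simp add: field_simps)
qed

lemma weighted_finite_discounted_sup:
  assumes "1 \<le> p" and f: "weighted_finite w p f"
  shows "weighted_finite w p (discounted_sup q f)"
proof (cases "p = \<infinity>")
  case True
  then obtain B where "\<And>k. w k * f k \<le> B" using f by (auto simp: weighted_finite_def bdd_above_def)
  then have "bdd_above (range (\<lambda>n. w n * discounted_sup q f n))"
    by (intro bdd_aboveI2 weighted_discounted_sup_le)
  with True show ?thesis by (simp add: weighted_finite_def)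
next
  case False
  then obtain P where P: "p = ereal P" "1 \<le> P" using \<open>1 \<le> p\<close> by (rule finite_exponent)
  define h where "h = (\<lambda>k. w k * f k powr P)"
  have h: "h summable_on UNIV" using f P by (simp add: weighted_finite_def h_def)
  have "(\<lambda>n. infsum (\<lambda>k. (1/2) ^ nat \<bar>n - k\<bar> * h k) UNIV) summable_on UNIV"
    by (rule summable_on_half_power_convolution[OF h]) (use w_pos in \<open>simp add: h_def less_imp_le\<close>)
  then have "(\<lambda>n. w n * discounted_sup q f n powr P) summable_on UNIV"
  proof (rule summable_on_comparison_test)
    show "w n * discounted_sup q f n powr P \<le> infsum (\<lambda>k. (1/2) ^ nat \<bar>n - k\<bar> * h k) UNIV" for n
      using weighted_powr_discounted_sup_le[OF P(2) h[unfolded h_def]] unfolding h_def .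
    show "0 \<le> w n * discounted_sup q f n powr P" for n using w_pos[of n] by simp
  qed
  with P show ?thesis by (simp add: weighted_finite_def)
qed

end

lemma weight_le_power_dist:
  fixes w :: "int \<Rightarrow> real"
  assumes w_pos: "\<And>n. 0 < w n"
    and ratio: "bdd_above (range (\<lambda>n. \<bar>w (n + 1) / w n\<bar> + \<bar>w n / w (n + 1)\<bar>))"
  obtains K where "1 \<le> K" "\<And>n k. w n \<le> K ^ nat \<bar>n - k\<bar> * w k"
proof -
  obtain K0 where K0: "\<And>n. \<bar>w (n + 1) / w n\<bar> + \<bar>w n / w (n + 1)\<bar> \<le> K0"
    using ratio unfolding bdd_above_def by auto
  define K where "K = max K0 1"
  have "1 \<le> K" by (simp add: K_def)
  have up: "w (n + 1) \<le> K * w n" and down: "w n \<le> K * w (n + 1)" for n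
  proof -
    have "0 < w (n + 1) / w n" "0 < w n / w (n + 1)" using w_pos[of n] w_pos[of "n + 1"] by simp_all
    then have "w (n + 1) / w n \<le> K" "w n / w (n + 1) \<le> K" using K0[of n] unfolding K_def by linarith+
    then show "w (n + 1) \<le> K * w n" "w n \<le> K * w (n + 1)"
      using w_pos[of n] w_pos[of "n + 1"] by (simp_all add: pos_divide_le_eq)
  qed
  have pow: "w (k + int d) \<le> K ^ d * w k \<and> w (k - int d) \<le> K ^ d * w k" for k d
  proof (induction d)
    case (Suc d)
    have "w (k + int (Suc d)) \<le> K * w (k + int d)" using up[of "k + int d"] by (simp add: ac_simps)
    moreover have "w (k - int (Suc d)) \<le> K * w (k - int d)" using down[of "k - int (Suc d)"] by simp
    moreover have "K * w (k + int d) \<le> K ^ Suc d * w k" "K * w (k - int d) \<le> K ^ Suc d * w k"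
      using Suc.IH mult_left_mono[of _ _ K] \<open>1 \<le> K\<close> by (simp_all add: mult.assoc)
    ultimately show ?case by linarith
  qed simp
  have "w n \<le> K ^ nat \<bar>n - k\<bar> * w k" for n k
    using pow[of k "nat \<bar>n - k\<bar>"] by (cases "k \<le> n") simp_all
  with \<open>1 \<le> K\<close> show ?thesis by (rule that)
qed

section \<open>Persistence of weighted decay\<close>

definition satisfies_local_inequality :: "real set \<Rightarrow> (real \<Rightarrow> seq) \<Rightarrow> (real \<Rightarrow> seq) \<Rightarrow> bool" where
  "satisfies_local_inequality I x y \<longleftrightarrow> (\<exists>x' y' Mu L R g. 0 \<le> L \<and> (\<forall>n. 0 \<le> g n) \<and> finite {n. g n \<noteq> 0} \<and>
    (\<forall>s\<in>I. \<forall>n. ((\<lambda>r. x r n) has_vector_derivative x' s n) (at s) \<and>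
      ((\<lambda>r. y r n) has_vector_derivative y' s n) (at s) \<and>
      norm (x s n) + norm (y s n) \<le> Mu \<and>
      norm (x' s n) \<le> L * (\<Sum>j\<in>{-int R..int R}. norm (x s (n + j)) + norm (y s (n + j))) + g n \<and>
      norm (y' s n) \<le> L * (\<Sum>j\<in>{-int R..int R}. norm (x s (n + j)) + norm (y s (n + j))) + g n))"

lemma weighted_supersolution_exists:
  fixes w f :: "int \<Rightarrow> real"
  assumes w_pos: "\<And>n. 0 < w n"
    and w_ratio: "bdd_above (range (\<lambda>n. \<bar>w (n + 1) / w n\<bar> + \<bar>w n / w (n + 1)\<bar>))"
    and p: "1 \<le> p" and f_nonneg: "\<And>n. 0 \<le> f n" and f_le: "\<And>n. f n \<le> Mf"
    and f_finite: "weighted_finite w p f" and L: "0 \<le> L"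
  obtains W lam where "weighted_finite w p W" "\<And>n. f n \<le> W n" "\<And>n. 0 \<le> W n" "0 \<le> lam"
    "\<And>g n. (\<And>n. g n \<le> f n) \<Longrightarrow> L * (\<Sum>j\<in>{-int R..int R}. W (n + j)) + g n \<le> lam / 2 * W n"
proof -
  obtain K where "1 \<le> K" and w_growth: "\<And>n k. w n \<le> K ^ nat \<bar>n - k\<bar> * w k"
    using weight_le_power_dist[OF w_pos w_ratio] by blast
  define q where "q = 1 / (2 * K)"
  have "0 < q" "q \<le> 1" "K * q = 1/2" unfolding q_def using \<open>1 \<le> K\<close> by (auto simp: field_simps)
  interpret discounted_sup_weighted q f Mf w K
    using \<open>0 < q\<close> \<open>q \<le> 1\<close> \<open>1 \<le> K\<close> \<open>K * q = 1/2\<close> f_nonneg f_le w_pos w_growth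
    by unfold_locales auto
  define lam where "lam = 2 * (L * (2 * real R + 1) / q ^ R + 1)"
  have lam_half: "lam / 2 = L * (2 * real R + 1) / q ^ R + 1" unfolding lam_def by simp
  show ?thesis
  proof (rule that[of "discounted_sup q f" lam])
    show "weighted_finite w p (discounted_sup q f)" by (rule weighted_finite_discounted_sup[OF p f_finite])
    show "0 \<le> lam" unfolding lam_def using L \<open>0 < q\<close> by simp
    show "L * (\<Sum>j\<in>{-int R..int R}. discounted_sup q f (n + j)) + g n \<le> lam / 2 * discounted_sup q f n"
      if "\<And>n. g n \<le> f n" for g n
      unfolding lam_half by (rule discounted_sup_supersolution[OF L that])
  qed (simp_all add: self_le_discounted_sup discounted_sup_nonneg)
qed

lemma weighted_decay_persists:
  fixes x y :: "real \<Rightarrow> seq" and w :: "int \<Rightarrow> real" and t0 T :: real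
  defines "I \<equiv> {t0 - T<..<t0 + T}"
  assumes w_ge: "\<And>n. 1 \<le> w n"
    and w_ratio: "bdd_above (range (\<lambda>n. \<bar>w (n + 1) / w n\<bar> + \<bar>w n / w (n + 1)\<bar>))"
    and p: "1 \<le> p" and T: "0 < T"
    and ineq: "satisfies_local_inequality I x y"
    and init: "wnorm_finite w p (x t0) (y t0)"
    and t: "t \<in> I"
  shows "wnorm_finite w p (x t) (y t)"
proof -
  obtain x' y' Mu L R g where L: "0 \<le> L" and g_nonneg: "\<And>n. 0 \<le> g n"
    and g_support: "finite {n. g n \<noteq> 0}"
    and ineqs: "\<And>s n. s \<in> I \<Longrightarrow> ((\<lambda>r. x r n) has_vector_derivative x' s n) (at s) \<and>
      ((\<lambda>r. y r n) has_vector_derivative y' s n) (at s) \<and>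
      norm (x s n) + norm (y s n) \<le> Mu \<and>
      norm (x' s n) \<le> L * (\<Sum>j\<in>{-int R..int R}. norm (x s (n + j)) + norm (y s (n + j))) + g n \<and>
      norm (y' s n) \<le> L * (\<Sum>j\<in>{-int R..int R}. norm (x s (n + j)) + norm (y s (n + j))) + g n"
    using ineq unfolding satisfies_local_inequality_def by blast
  have w_pos: "0 < w n" for n using w_ge[of n] by linarith
  have "t0 \<in> I" unfolding I_def using T by simp
  define f where "f n = norm (x t0 n) + norm (y t0 n) + g n" for n
  have "g n \<le> Max (insert 0 (g ` {n. g n \<noteq> 0}))" for n
    using g_support by (cases "g n = 0") auto
  then obtain Mg where "\<And>n. g n \<le> Mg" by blast
  then have f_le: "f n \<le> Mu + Mg" for n using ineqs[OF \<open>t0 \<in> I\<close>] unfolding f_def by (smt (verit))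
  have f_nonneg: "0 \<le> f n" for n using g_nonneg[of n] unfolding f_def by simp
  have f_finite: "weighted_finite w p f"
    unfolding f_def
    by (rule weighted_finite_add[OF _ weighted_finite_finite_support[OF g_support]])
      (use init w_pos p g_nonneg in \<open>auto simp: wnorm_finite_iff_weighted_finite less_imp_le\<close>)
  obtain W lam where W_finite: "weighted_finite w p W" and f_le_W: "\<And>n. f n \<le> W n"
    and "\<And>n. 0 \<le> W n" "0 \<le> lam"
    and super: "\<And>g n. (\<And>n. g n \<le> f n) \<Longrightarrow> L * (\<Sum>j\<in>{-int R..int R}. W (n + j)) + g n \<le> lam / 2 * W n"
    using weighted_supersolution_exists[OF w_pos w_ratio p f_nonneg f_le f_finite L, where R=R] by blast
  interpret lattice_differential_inequality x y x' y' I t0 L Mu lam R g W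
  proof unfold_locales
    show "norm (x t0 n) + norm (y t0 n) \<le> W n" for n
      using f_le_W[of n] g_nonneg[of n] unfolding f_def by linarith
    show "L * (\<Sum>j\<in>{-int R..int R}. W (n + j)) + g n \<le> lam / 2 * W n" for n
      by (rule super) (simp add: f_def)
  qed (use ineqs L g_nonneg \<open>0 \<le> lam\<close> in blast)+
  have "{min t0 t..max t0 t} \<subseteq> I" using t \<open>t0 \<in> I\<close> unfolding I_def by auto
  then have "norm (x t n) + norm (y t n) \<le> exp (lam * \<bar>t - t0\<bar>) * W n" for n
    by (rule two_sided_bound)
  then have "weighted_finite w p (\<lambda>n. norm (x t n) + norm (y t n))"
    using p w_pos \<open>\<And>n. 0 \<le> W n\<close>
    by (intro weighted_finite_mono[OF weighted_finite_cmult[OF W_finite, where c="exp (lam * \<bar>t - t0\<bar>)"]])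
      (auto intro: less_imp_le)
  then show ?thesis using w_pos p by (simp add: wnorm_finite_iff_weighted_finite less_imp_le)
qed

section \<open>Glued solutions\<close>

definition glue :: "seq \<Rightarrow> seq \<Rightarrow> seq" where
  "glue l r n = (if 0 \<le> n then r n else l n)"

text \<open>Away from the junction the glued operator is the operator of one of the two glued
  inputs, so only the 2R sites around 0 contribute a source term.\<close>

lemma local_of_radius_glue:
  assumes "local_of_radius R F"
  shows "\<exists>C B. 0 \<le> C \<and> 0 \<le> B \<and> (\<forall>a b al bl ar br n.
    seqs_bounded M a b ar br \<longrightarrow> seqs_bounded M a b al bl \<longrightarrow>
    norm (F a b n - glue (F al bl) (F ar br) n)
      \<le> C * window_dist R a b (glue al ar) (glue bl br) n + (if - int R \<le> n \<and> n < int R then B else 0))"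
proof -
  obtain C0 B0 where CB: "\<And>a b a' b' n. seqs_bounded M a b a' b' \<Longrightarrow>
      norm (F a b n) \<le> B0 \<and> norm (F a b n - F a' b' n) \<le> C0 * window_dist R a b a' b' n"
    using local_of_radiusD[OF assms, of M] by blast
  have bound: "norm (F a b n - glue (F al bl) (F ar br) n)
      \<le> max C0 0 * window_dist R a b (glue al ar) (glue bl br) n
        + (if - int R \<le> n \<and> n < int R then 2 * max B0 0 else 0)"
    if r: "seqs_bounded M a b ar br" and l: "seqs_bounded M a b al bl" for a b al bl ar br n
  proof -
    have C_mono: "C0 * d \<le> max C0 0 * d" if "0 \<le> d" for d
      using that by (intro mult_right_mono) auto
    have wd: "0 \<le> window_dist R a b (glue al ar) (glue bl br) n" by (rule window_dist_nonneg)
    consider "int R \<le> n" | "n < - int R" | "- int R \<le> n \<and> n < int R" by linarith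
    then show ?thesis
    proof cases
      case 1
      then have "window_dist R a b (glue al ar) (glue bl br) n = window_dist R a b ar br n"
        unfolding window_dist_def glue_def by (intro sum.cong) auto
      then show ?thesis
        using CB[OF r, of n] C_mono[OF wd] 1 by (simp add: glue_def)
    next
      case 2
      then have "window_dist R a b (glue al ar) (glue bl br) n = window_dist R a b al bl n"
        unfolding window_dist_def glue_def by (intro sum.cong) auto
      then show ?thesis
        using CB[OF l, of n] C_mono[OF wd] 2 by (simp add: glue_def)
    next
      case 3
      have "norm (F a b n - glue (F al bl) (F ar br) n) \<le> 2 * max B0 0"
        using CB[OF r, of n] CB[OF l, of n] CB[OF seqs_bounded_swap[OF r], of n]
          CB[OF seqs_bounded_swap[OF l], of n] norm_triangle_ineq4[of "F a b n"]
        unfolding glue_def by (smt (verit))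
      then show ?thesis using 3 wd by (simp add: add_increasing)
    qed
  qed
  show ?thesis by (rule exI[of _ "max C0 0"], rule exI[of _ "2 * max B0 0"]) (use bound in auto)
qed

lemma glued_difference_inequality:
  fixes A B :: "seq \<Rightarrow> seq \<Rightarrow> seq" and a b al bl ar br x' y' :: "real \<Rightarrow> seq"
  defines "x \<equiv> \<lambda>t n. a t n - glue (al t) (ar t) n" and "y \<equiv> \<lambda>t n. b t n - glue (bl t) (br t) n"
  assumes "local_op A" "local_op B"
    and bounded: "\<And>t. t \<in> I \<Longrightarrow> seqs_bounded M (a t) (b t) (ar t) (br t) \<and> seqs_bounded M (a t) (b t) (al t) (bl t)"
    and x': "\<And>t n. t \<in> I \<Longrightarrow> x' t n = A (a t) (b t) n - glue (A (al t) (bl t)) (A (ar t) (br t)) n"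
    and y': "\<And>t n. t \<in> I \<Longrightarrow> y' t n = B (a t) (b t) n - glue (B (al t) (bl t)) (B (ar t) (br t)) n"
  shows "\<exists>L R g. 0 \<le> L \<and> (\<forall>n. 0 \<le> g n) \<and> finite {n. g n \<noteq> 0} \<and> (\<forall>t\<in>I. \<forall>n.
    norm (x' t n) \<le> L * (\<Sum>j\<in>{-int R..int R}. norm (x t (n + j)) + norm (y t (n + j))) + g n \<and>
    norm (y' t n) \<le> L * (\<Sum>j\<in>{-int R..int R}. norm (x t (n + j)) + norm (y t (n + j))) + g n)"
proof -
  obtain R where "local_of_radius R A" "local_of_radius R B"
    using \<open>local_op A\<close> \<open>local_op B\<close> by (rule local_op_common_radius)
  then obtain Ca Ba Cb Bb where C: "0 \<le> Ca" "0 \<le> Ba" "0 \<le> Cb" "0 \<le> Bb"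
    and A: "\<And>a b al bl ar br n. seqs_bounded M a b ar br \<Longrightarrow> seqs_bounded M a b al bl \<Longrightarrow>
      norm (A a b n - glue (A al bl) (A ar br) n)
        \<le> Ca * window_dist R a b (glue al ar) (glue bl br) n + (if - int R \<le> n \<and> n < int R then Ba else 0)"
    and B: "\<And>a b al bl ar br n. seqs_bounded M a b ar br \<Longrightarrow> seqs_bounded M a b al bl \<Longrightarrow>
      norm (B a b n - glue (B al bl) (B ar br) n)
        \<le> Cb * window_dist R a b (glue al ar) (glue bl br) n + (if - int R \<le> n \<and> n < int R then Bb else 0)"
    using local_of_radius_glue[of R A M] local_of_radius_glue[of R B M] by metis
  define L where "L = max Ca Cb"
  define g where "g n = (if - int R \<le> n \<and> n < int R then max Ba Bb else 0)" for n
  have "norm (x' t n) \<le> L * (\<Sum>j\<in>{-int R..int R}. norm (x t (n + j)) + norm (y t (n + j))) + g n \<and>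
        norm (y' t n) \<le> L * (\<Sum>j\<in>{-int R..int R}. norm (x t (n + j)) + norm (y t (n + j))) + g n"
    if t: "t \<in> I" for t n
  proof -
    let ?S = "\<Sum>j\<in>{-int R..int R}. norm (x t (n + j)) + norm (y t (n + j))"
    have "window_dist R (a t) (b t) (glue (al t) (ar t)) (glue (bl t) (br t)) n = ?S"
      unfolding window_dist_def x_def y_def ..
    then have "norm (x' t n) \<le> Ca * ?S + (if - int R \<le> n \<and> n < int R then Ba else 0)"
      "norm (y' t n) \<le> Cb * ?S + (if - int R \<le> n \<and> n < int R then Bb else 0)"
      using A[of "a t" "b t" "ar t" "br t" "al t" "bl t" n] B[of "a t" "b t" "ar t" "br t" "al t" "bl t" n]
        bounded[OF t] x'[OF t] y'[OF t] by simp_all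
    moreover have "0 \<le> ?S" by (intro sum_nonneg) auto
    then have "Ca * ?S \<le> L * ?S" "Cb * ?S \<le> L * ?S" by (auto simp: L_def intro: mult_right_mono)
    moreover have "(if - int R \<le> n \<and> n < int R then Ba else 0) \<le> g n"
      "(if - int R \<le> n \<and> n < int R then Bb else 0) \<le> g n" by (auto simp: g_def)
    ultimately show ?thesis by linarith
  qed
  moreover have "finite {n. g n \<noteq> 0}" by (rule finite_subset[of _ "{- int R..<int R}"]) (auto simp: g_def)
  moreover have "0 \<le> L" "\<forall>n. 0 \<le> g n" using C by (auto simp: L_def g_def)
  ultimately show ?thesis by blast
qed

lemma AL_glued_difference_ode:
  fixes \<alpha> \<beta> \<alpha>l \<beta>l \<alpha>r \<beta>r :: "real \<Rightarrow> seq" and rm rp :: nat and cm cp :: "nat \<Rightarrow> complex"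
  defines "A \<equiv> AL_rhs_alpha rm rp cm cp" and "B \<equiv> AL_rhs_beta rm rp cm cp"
  assumes sol: "AL_solution rm rp cm cp I \<alpha> \<beta>"
    and sol_l: "AL_solution rm rp cm cp I \<alpha>l \<beta>l"
    and sol_r: "AL_solution rm rp cm cp I \<alpha>r \<beta>r"
  shows "\<exists>M x' y'. \<forall>t\<in>I. seqs_bounded M (\<alpha> t) (\<beta> t) (\<alpha>r t) (\<beta>r t) \<and> seqs_bounded M (\<alpha> t) (\<beta> t) (\<alpha>l t) (\<beta>l t) \<and>
    (\<forall>n. ((\<lambda>s. \<alpha> s n - glue (\<alpha>l s) (\<alpha>r s) n) has_vector_derivative x' t n) (at t) \<and>
         ((\<lambda>s. \<beta> s n - glue (\<beta>l s) (\<beta>r s) n) has_vector_derivative y' t n) (at t) \<and>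
         x' t n = A (\<alpha> t) (\<beta> t) n - glue (A (\<alpha>l t) (\<beta>l t)) (A (\<alpha>r t) (\<beta>r t)) n \<and>
         y' t n = B (\<alpha> t) (\<beta> t) n - glue (B (\<alpha>l t) (\<beta>l t)) (B (\<alpha>r t) (\<beta>r t)) n)"
proof -
  obtain M1 a' b' where S: "\<And>t n. t \<in> I \<Longrightarrow> norm (\<alpha> t n) \<le> M1 \<and> norm (\<beta> t n) \<le> M1 \<and>
      ((\<lambda>s. \<alpha> s n) has_vector_derivative a' t n) (at t) \<and> ((\<lambda>s. \<beta> s n) has_vector_derivative b' t n) (at t) \<and>
      a' t n = A (\<alpha> t) (\<beta> t) n \<and> b' t n = B (\<alpha> t) (\<beta> t) n"
    using AL_solutionD[OF sol] unfolding A_def B_def by blast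
  obtain M2 al' bl' where Sl: "\<And>t n. t \<in> I \<Longrightarrow> norm (\<alpha>l t n) \<le> M2 \<and> norm (\<beta>l t n) \<le> M2 \<and>
      ((\<lambda>s. \<alpha>l s n) has_vector_derivative al' t n) (at t) \<and> ((\<lambda>s. \<beta>l s n) has_vector_derivative bl' t n) (at t) \<and>
      al' t n = A (\<alpha>l t) (\<beta>l t) n \<and> bl' t n = B (\<alpha>l t) (\<beta>l t) n"
    using AL_solutionD[OF sol_l] unfolding A_def B_def by blast
  obtain M3 ar' br' where Sr: "\<And>t n. t \<in> I \<Longrightarrow> norm (\<alpha>r t n) \<le> M3 \<and> norm (\<beta>r t n) \<le> M3 \<and>
      ((\<lambda>s. \<alpha>r s n) has_vector_derivative ar' t n) (at t) \<and> ((\<lambda>s. \<beta>r s n) has_vector_derivative br' t n) (at t) \<and>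
      ar' t n = A (\<alpha>r t) (\<beta>r t) n \<and> br' t n = B (\<alpha>r t) (\<beta>r t) n"
    using AL_solutionD[OF sol_r] unfolding A_def B_def by blast
  define M where "M = max M1 (max M2 M3)"
  have bnd: "seqs_bounded M (\<alpha> t) (\<beta> t) (\<alpha>r t) (\<beta>r t) \<and> seqs_bounded M (\<alpha> t) (\<beta> t) (\<alpha>l t) (\<beta>l t)"
    if "t \<in> I" for t
    using S[OF that] Sl[OF that] Sr[OF that] unfolding seqs_bounded_def M_def
    by (meson max.coboundedI1 max.coboundedI2 order_trans)
  have der: "((\<lambda>s. \<alpha> s n - glue (\<alpha>l s) (\<alpha>r s) n) has_vector_derivative a' t n - glue (al' t) (ar' t) n) (at t) \<and>
      ((\<lambda>s. \<beta> s n - glue (\<beta>l s) (\<beta>r s) n) has_vector_derivative b' t n - glue (bl' t) (br' t) n) (at t)"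
    if "t \<in> I" for t n
  proof -
    have "((\<lambda>s. \<alpha> s n) has_vector_derivative a' t n) (at t)" "((\<lambda>s. \<beta> s n) has_vector_derivative b' t n) (at t)"
      "((\<lambda>s. \<alpha>l s n) has_vector_derivative al' t n) (at t)" "((\<lambda>s. \<beta>l s n) has_vector_derivative bl' t n) (at t)"
      "((\<lambda>s. \<alpha>r s n) has_vector_derivative ar' t n) (at t)" "((\<lambda>s. \<beta>r s n) has_vector_derivative br' t n) (at t)"
      using S[OF that] Sl[OF that] Sr[OF that] by blast+
    then show ?thesis unfolding glue_def by (cases "0 \<le> n") (simp_all add: has_vector_derivative_diff)
  qed
  have eq: "a' t n - glue (al' t) (ar' t) n = A (\<alpha> t) (\<beta> t) n - glue (A (\<alpha>l t) (\<beta>l t)) (A (\<alpha>r t) (\<beta>r t)) n \<and>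
      b' t n - glue (bl' t) (br' t) n = B (\<alpha> t) (\<beta> t) n - glue (B (\<alpha>l t) (\<beta>l t)) (B (\<alpha>r t) (\<beta>r t)) n"
    if "t \<in> I" for t n
    using S[OF that, of n] Sl[OF that, of n] Sr[OF that, of n] by (simp add: glue_def)
  show ?thesis
    by (rule exI[of _ M], rule exI[of _ "\<lambda>t n. a' t n - glue (al' t) (ar' t) n"],
        rule exI[of _ "\<lambda>t n. b' t n - glue (bl' t) (br' t) n"]) (use bnd der eq in blast)
qed

lemma AL_glued_difference_satisfies_local_inequality:
  assumes sol: "AL_solution rm rp cm cp I \<alpha> \<beta>"
    and sol_l: "AL_solution rm rp cm cp I \<alpha>l \<beta>l"
    and sol_r: "AL_solution rm rp cm cp I \<alpha>r \<beta>r"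
  shows "satisfies_local_inequality I
    (\<lambda>t n. \<alpha> t n - glue (\<alpha>l t) (\<alpha>r t) n) (\<lambda>t n. \<beta> t n - glue (\<beta>l t) (\<beta>r t) n)"
proof -
  define x where "x = (\<lambda>t n. \<alpha> t n - glue (\<alpha>l t) (\<alpha>r t) n)"
  define y where "y = (\<lambda>t n. \<beta> t n - glue (\<beta>l t) (\<beta>r t) n)"
  obtain M x' y' where ode: "\<forall>t\<in>I.
    seqs_bounded M (\<alpha> t) (\<beta> t) (\<alpha>r t) (\<beta>r t) \<and> seqs_bounded M (\<alpha> t) (\<beta> t) (\<alpha>l t) (\<beta>l t) \<and>
    (\<forall>n. ((\<lambda>s. x s n) has_vector_derivative x' t n) (at t) \<and> ((\<lambda>s. y s n) has_vector_derivative y' t n) (at t) \<and>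
      x' t n = AL_rhs_alpha rm rp cm cp (\<alpha> t) (\<beta> t) n
        - glue (AL_rhs_alpha rm rp cm cp (\<alpha>l t) (\<beta>l t)) (AL_rhs_alpha rm rp cm cp (\<alpha>r t) (\<beta>r t)) n \<and>
      y' t n = AL_rhs_beta rm rp cm cp (\<alpha> t) (\<beta> t) n
        - glue (AL_rhs_beta rm rp cm cp (\<alpha>l t) (\<beta>l t)) (AL_rhs_beta rm rp cm cp (\<alpha>r t) (\<beta>r t)) n)"
    using AL_glued_difference_ode[OF sol sol_l sol_r] unfolding x_def y_def by blast
  have "\<exists>L R g. 0 \<le> L \<and> (\<forall>n. 0 \<le> g n) \<and> finite {n. g n \<noteq> 0} \<and> (\<forall>t\<in>I. \<forall>n.
      norm (x' t n) \<le> L * (\<Sum>j\<in>{-int R..int R}. norm (x t (n + j)) + norm (y t (n + j))) + g n \<and>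
      norm (y' t n) \<le> L * (\<Sum>j\<in>{-int R..int R}. norm (x t (n + j)) + norm (y t (n + j))) + g n)"
    unfolding x_def y_def
    by (rule glued_difference_inequality[OF local_op_AL_rhs, where M=M]) (use ode in blast)+
  moreover have "norm (x t n) + norm (y t n) \<le> 4 * M" if "t \<in> I" for t n
    using ode that norm_triangle_ineq4 unfolding x_def y_def glue_def seqs_bounded_def by (smt (verit))
  ultimately have "satisfies_local_inequality I x y"
    unfolding satisfies_local_inequality_def using ode by blast
  then show ?thesis unfolding x_def y_def .
qed

theorem lemma3p2:
  fixes w :: "int \<Rightarrow> real" and p :: ereal
    and rm rp :: nat and cm cp :: "nat \<Rightarrow> complex"
    and t0 T :: real
    and \<alpha> \<beta> \<alpha>l \<beta>l \<alpha>r \<beta>r :: "real \<Rightarrow> int \<Rightarrow> complex"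
  assumes w_ge: "\<And>n. w n \<ge> 1"
    and w_ratio: "bdd_above (range (\<lambda>n. \<bar>w (n + 1) / w n\<bar> + \<bar>w n / w (n + 1)\<bar>))"
    and p: "1 \<le> p"
    and T: "T > 0"
    and sol: "AL_solution rm rp cm cp {t0 - T<..<t0 + T} \<alpha> \<beta>"
    and sol_l: "AL_solution rm rp cm cp {t0 - T<..<t0 + T} \<alpha>l \<beta>l"
    and sol_r: "AL_solution rm rp cm cp {t0 - T<..<t0 + T} \<alpha>r \<beta>r"
    and init: "wnorm_finite w p
                 (\<lambda>n. \<alpha> t0 n - (if n \<ge> 0 then \<alpha>r t0 n else \<alpha>l t0 n))
                 (\<lambda>n. \<beta> t0 n - (if n \<ge> 0 then \<beta>r t0 n else \<beta>l t0 n))"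
  shows "\<forall>t\<in>{t0 - T<..<t0 + T}. wnorm_finite w p
                 (\<lambda>n. \<alpha> t n - (if n \<ge> 0 then \<alpha>r t n else \<alpha>l t n))
                 (\<lambda>n. \<beta> t n - (if n \<ge> 0 then \<beta>r t n else \<beta>l t n))"
proof
  fix t assume t: "t \<in> {t0 - T<..<t0 + T}"
  have "wnorm_finite w p (\<lambda>n. \<alpha> t0 n - glue (\<alpha>l t0) (\<alpha>r t0) n) (\<lambda>n. \<beta> t0 n - glue (\<beta>l t0) (\<beta>r t0) n)"
    using init by (simp add: glue_def)
  with AL_glued_difference_satisfies_local_inequality[OF sol sol_l sol_r]
  have "wnorm_finite w p (\<lambda>n. \<alpha> t n - glue (\<alpha>l t) (\<alpha>r t) n) (\<lambda>n. \<beta> t n - glue (\<beta>l t) (\<beta>r t) n)"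
    by (rule weighted_decay_persists[OF w_ge w_ratio p T _ _ t])
  then show "wnorm_finite w p
      (\<lambda>n. \<alpha> t n - (if n \<ge> 0 then \<alpha>r t n else \<alpha>l t n))
      (\<lambda>n. \<beta> t n - (if n \<ge> 0 then \<beta>r t n else \<beta>l t n))"
    by (simp add: glue_def)
qed

end
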